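(* Let $k\ge1$. Every Motzkin $k$-diagram $d$ can be written as a product $d=r\,t\,\ell$ (with coefficient $1$) of a diagram $r$ spanning $\mathsf{RP}_k$, a Temperley–Lieb diagram $t$, and a diagram $\ell$ spanning $\mathsf{LP}_k$. Consequently $\mathsf M_k(x)=\mathsf{RP}_k\,\mathsf{TL}_k(x)\,\mathsf{LP}_k$. Moreover $\mathsf{RP}_k$ is generated as a unital algebra by $r_1,\dots,r_{k-1},p_1,\dots,p_k$ and $\mathsf{LP}_k$ by $\ell_1,\dots,\ell_{k-1},p_1,\dots,p_k$.
   Context: Let $\mathbb K$ be a commutative ring with 1 and $x\in\mathbb K$. A Motzkin $k$-diagram consists of two rows of $k$ vertices, a top row $1,\dots,k$ and a bottom row $1',\dots,k'$ (each listed left to right), together with a set of edges, each joining two distinct vertices, such that every vertex lies on at most one edge and the edges are planar (they can be drawn inside the rectangle spanned by the vertices without crossings). An edge joining a top vertex to a bottom vertex is vertical, an edge joining two vertices of the same row is horizontal. $\mathsf M_k(x)$ is the free $\mathbb K$-module with basis the Motzkin $k$-diagrams, with product: place $d_1$ above $d_2$, identifying the bottom vertices of $d_1$ with the top vertices of $d_2$; let $d_3$ be the diagram on the top row of $d_1$ and bottom row of $d_2$ in which two vertices are joined iff connected by a path in the stacked graph, and $\kappa(d_1,d_2)$ the number of closed loops in the middle row; then $d_1d_2=x^{\kappa(d_1,d_2)}d_3$. A Temperley–Lieb diagram is a Motzkin $k$-diagram in which every vertex lies on an edge; $\mathsf{TL}_k(x)$ is their span. $\mathsf{RP}_k$ is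 the span of the Motzkin diagrams with no horizontal edges in which every vertical edge joins a top vertex $i$ to a bottom vertex $j'$ with $i\ge j$; $\mathsf{LP}_k$ is the span of those with no horizontal edges and every vertical edge $i$—$j'$ satisfying $i\le j$. The diagrams $r_i,\ell_i$ ($1\le i<k$): $r_i$ has vertical edges $j$—$j'$ for $j\ne i,i+1$ and the edge $(i+1)$—$i'$; $\ell_i$ has vertical edges $j$—$j'$ for $j\ne i,i+1$ and the edge $i$—$(i+1)'$. For $1\le j\le k$, $p_j$ is the diagram with vertical edges $m$—$m'$ for all $m\ne j$ and vertices $j,j'$ isolated. *)

theory Defs
  imports Main
begin

text \<open>Vertices of a k-diagram: top vertex T i (i.e. i) and bottom vertex B i (i.e. i').\<close>
datatype vtx = T nat | B nat

text \<open>A diagram is a set of edges; an edge is a two-element set of vertices.\<close>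
type_synonym diagram = "vtx set set"

definition verts :: "nat \<Rightarrow> vtx set" where
  "verts k = {T i | i. 1 \<le> i \<and> i \<le> k} \<union> {B i | i. 1 \<le> i \<and> i \<le> k}"

text \<open>Position of a vertex when walking around the boundary of the rectangle:
  top row 1..k left to right, then bottom row k'..1' right to left.\<close>
fun bpos :: "nat \<Rightarrow> vtx \<Rightarrow> nat" where
  "bpos k (T i) = i"
| "bpos k (B i) = 2 * k + 1 - i"

definition is_edge :: "nat \<Rightarrow> vtx set \<Rightarrow> bool" where
  "is_edge k e \<longleftrightarrow> (\<exists>u v. e = {u, v} \<and> u \<noteq> v \<and> u \<in> verts k \<and> v \<in> verts k)"

text \<open>Planarity: no two edges cross (w.r.t. the cyclic boundary order).\<close>
definition noncrossing :: "nat \<Rightarrow> diagram \<Rightarrow> bool" where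
  "noncrossing k d \<longleftrightarrow>
     (\<forall>e1\<in>d. \<forall>e2\<in>d. \<forall>a b c e. e1 = {a, b} \<and> e2 = {c, e} \<longrightarrow>
        \<not> (bpos k a < bpos k c \<and> bpos k c < bpos k b \<and> bpos k b < bpos k e))"

definition motzkin :: "nat \<Rightarrow> diagram \<Rightarrow> bool" where
  "motzkin k d \<longleftrightarrow>
     (\<forall>e\<in>d. is_edge k e) \<and>
     (\<forall>e1\<in>d. \<forall>e2\<in>d. e1 \<inter> e2 \<noteq> {} \<longrightarrow> e1 = e2) \<and>
     noncrossing k d"

definition covered :: "diagram \<Rightarrow> vtx \<Rightarrow> bool" where
  "covered d v \<longleftrightarrow> (\<exists>e\<in>d. v \<in> e)"

definition tl_diagram :: "nat \<Rightarrow> diagram \<Rightarrow> bool" where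
  "tl_diagram k d \<longleftrightarrow> motzkin k d \<and> (\<forall>v\<in>verts k. covered d v)"

definition rp_diagram :: "nat \<Rightarrow> diagram \<Rightarrow> bool" where
  "rp_diagram k d \<longleftrightarrow> motzkin k d \<and> (\<forall>e\<in>d. \<exists>i j. e = {T i, B j} \<and> i \<ge> j)"

definition lp_diagram :: "nat \<Rightarrow> diagram \<Rightarrow> bool" where
  "lp_diagram k d \<longleftrightarrow> motzkin k d \<and> (\<forall>e\<in>d. \<exists>i j. e = {T i, B j} \<and> i \<le> j)"

datatype vtx3 = Up nat | Mid nat | Dn nat

fun emb1 :: "vtx \<Rightarrow> vtx3" where
  "emb1 (T i) = Up i" | "emb1 (B i) = Mid i"

fun emb2 :: "vtx \<Rightarrow> vtx3" where
  "emb2 (T i) = Mid i" | "emb2 (B i) = Dn i"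

fun embo :: "vtx \<Rightarrow> vtx3" where
  "embo (T i) = Up i" | "embo (B i) = Dn i"

text \<open>Adjacency in the stacked graph (edges of d1 and d2 are kept separate,
  so double edges in the middle row are counted correctly as loops).\<close>
definition stack_adj :: "diagram \<Rightarrow> diagram \<Rightarrow> (vtx3 \<times> vtx3) set" where
  "stack_adj d1 d2 =
     {(emb1 a, emb1 b) | a b. {a, b} \<in> d1 \<and> a \<noteq> b} \<union>
     {(emb2 a, emb2 b) | a b. {a, b} \<in> d2 \<and> a \<noteq> b}"

definition stack_conn :: "diagram \<Rightarrow> diagram \<Rightarrow> (vtx3 \<times> vtx3) set" where
  "stack_conn d1 d2 = (stack_adj d1 d2)\<^sup>*"

definition compose :: "diagram \<Rightarrow> diagram \<Rightarrow> diagram" where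
  "compose d1 d2 = {{u, v} | u v. u \<noteq> v \<and> (embo u, embo v) \<in> stack_conn d1 d2}"

text \<open>Closed loops: connected components lying entirely in the middle row in which
  every vertex has degree 2 (i.e. is met by an edge of d1 and by an edge of d2).\<close>
definition loops :: "diagram \<Rightarrow> diagram \<Rightarrow> vtx3 set set" where
  "loops d1 d2 =
     {C. \<exists>i. C = stack_conn d1 d2 `` {Mid i} \<and>
            (\<forall>w\<in>C. \<exists>j. w = Mid j \<and> covered d1 (B j) \<and> covered d2 (T j))}"

definition kappa :: "diagram \<Rightarrow> diagram \<Rightarrow> nat" where
  "kappa d1 d2 = card (loops d1 d2)"

text \<open>Elements of M_k(x) are coefficient functions on diagrams supported on Motzkin k-diagrams.\<close>

definition Mot :: "nat \<Rightarrow> diagram set" where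
  "Mot k = {d. motzkin k d}"

definition basis :: "diagram \<Rightarrow> diagram \<Rightarrow> 'a::comm_ring_1" where
  "basis d = (\<lambda>e. if e = d then 1 else 0)"

definition mmult :: "nat \<Rightarrow> 'a::comm_ring_1 \<Rightarrow> (diagram \<Rightarrow> 'a) \<Rightarrow> (diagram \<Rightarrow> 'a) \<Rightarrow> (diagram \<Rightarrow> 'a)" where
  "mmult k x f g = (\<lambda>d. \<Sum>p\<in>{(d1, d2). d1 \<in> Mot k \<and> d2 \<in> Mot k \<and> compose d1 d2 = d}.
        f (fst p) * g (snd p) * x ^ kappa (fst p) (snd p))"

definition supported :: "(diagram \<Rightarrow> bool) \<Rightarrow> (diagram \<Rightarrow> 'a::zero) set" where
  "supported P = {f. \<forall>d. f d \<noteq> 0 \<longrightarrow> P d}"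

definition Mk :: "nat \<Rightarrow> (diagram \<Rightarrow> 'a::comm_ring_1) set" where
  "Mk k = supported (motzkin k)"

definition TLk :: "nat \<Rightarrow> (diagram \<Rightarrow> 'a::comm_ring_1) set" where
  "TLk k = supported (tl_diagram k)"

definition RPk :: "nat \<Rightarrow> (diagram \<Rightarrow> 'a::comm_ring_1) set" where
  "RPk k = supported (rp_diagram k)"

definition LPk :: "nat \<Rightarrow> (diagram \<Rightarrow> 'a::comm_ring_1) set" where
  "LPk k = supported (lp_diagram k)"

inductive_set lspan :: "(diagram \<Rightarrow> 'a::comm_ring_1) set \<Rightarrow> (diagram \<Rightarrow> 'a) set"
  for S where
  zero: "(\<lambda>_. 0) \<in> lspan S"
| gen: "f \<in> S \<Longrightarrow> f \<in> lspan S"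
| add: "f \<in> lspan S \<Longrightarrow> g \<in> lspan S \<Longrightarrow> (\<lambda>d. f d + g d) \<in> lspan S"
| smul: "f \<in> lspan S \<Longrightarrow> (\<lambda>d. c * f d) \<in> lspan S"

definition triple_prod :: "nat \<Rightarrow> 'a::comm_ring_1 \<Rightarrow> (diagram \<Rightarrow> 'a) set \<Rightarrow> (diagram \<Rightarrow> 'a) set
    \<Rightarrow> (diagram \<Rightarrow> 'a) set \<Rightarrow> (diagram \<Rightarrow> 'a) set" where
  "triple_prod k x SA SB SC =
     lspan {mmult k x (mmult k x a b) c | a b c. a \<in> SA \<and> b \<in> SB \<and> c \<in> SC}"

definition idd :: "nat \<Rightarrow> diagram" where
  "idd k = {{T j, B j} | j. 1 \<le> j \<and> j \<le> k}"

inductive_set alg_gen :: "nat \<Rightarrow> 'a::comm_ring_1 \<Rightarrow> (diagram \<Rightarrow> 'a) set \<Rightarrow> (diagram \<Rightarrow> 'a) set"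
  for k x S where
  one: "basis (idd k) \<in> alg_gen k x S"
| gen: "f \<in> S \<Longrightarrow> f \<in> alg_gen k x S"
| add: "f \<in> alg_gen k x S \<Longrightarrow> g \<in> alg_gen k x S \<Longrightarrow> (\<lambda>d. f d + g d) \<in> alg_gen k x S"
| smul: "f \<in> alg_gen k x S \<Longrightarrow> (\<lambda>d. c * f d) \<in> alg_gen k x S"
| mult: "f \<in> alg_gen k x S \<Longrightarrow> g \<in> alg_gen k x S \<Longrightarrow> mmult k x f g \<in> alg_gen k x S"

definition r_diag :: "nat \<Rightarrow> nat \<Rightarrow> diagram" where
  "r_diag k i = {{T j, B j} | j. 1 \<le> j \<and> j \<le> k \<and> j \<noteq> i \<and> j \<noteq> i + 1} \<union> {{T (i + 1), B i}}"

definition l_diag :: "nat \<Rightarrow> nat \<Rightarrow> diagram" where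
  "l_diag k i = {{T j, B j} | j. 1 \<le> j \<and> j \<le> k \<and> j \<noteq> i \<and> j \<noteq> i + 1} \<union> {{T i, B (i + 1)}}"

definition p_diag :: "nat \<Rightarrow> nat \<Rightarrow> diagram" where
  "p_diag k j = {{T m, B m} | m. 1 \<le> m \<and> m \<le> k \<and> m \<noteq> j}"

end

theory Submission
  imports Defs
begin

text \<open>
  The central tool describes a product of diagrams one of which is vertical (all
  edges join the two rows): it is the pullback of the other factor along a partial bijection of
  the vertices (compose_vertical_left); the top-bottom flip, an anti-automorphism of composition,
  yields the mirror statement (compose_vertical_right). Such products have no closed loops, so
  in the algebra they are products with coefficient 1.

  RP_k and LP_k are treated together as spans of directional diagrams, whose edges i -- j' all
  satisfy a relation R i j. By induction on the total displacement of the strands, every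
  directional diagram is a product of slides (the r_i, resp. l_i) and the p_j; conversely,
  directional diagrams are closed under composition (RPk_generated, LPk_generated).

  For a Motzkin diagram d (locale motzkin_factorisation) the covered vertices are moved, in
  order, to the leftmost positions of their rows; t is d transported along this relabelling and
  completed by arcs joining the remaining vertices, and r, l realise the relabelling. Then
  d = r t l without closed loops, which gives M_k = RP_k TL_k LP_k (Mk_eq_triple_prod).
\<close>

lemma verts_T [simp]: "T i \<in> verts k \<longleftrightarrow> 1 \<le> i \<and> i \<le> k"
  and verts_B [simp]: "B i \<in> verts k \<longleftrightarrow> 1 \<le> i \<and> i \<le> k"
  by (auto simp: verts_def)

lemma finite_verts: "finite (verts k)"
proof -
  have "verts k = T ` {1..k} \<union> B ` {1..k}" unfolding verts_def by auto
  then show ?thesis by simp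
qed

lemma motzkin_edge:
  "motzkin k d \<Longrightarrow> E \<in> d \<Longrightarrow> \<exists>u v. E = {u, v} \<and> u \<noteq> v \<and> u \<in> verts k \<and> v \<in> verts k"
  by (auto simp: motzkin_def is_edge_def)

lemma motzkin_verts: "motzkin k d \<Longrightarrow> E \<in> d \<Longrightarrow> w \<in> E \<Longrightarrow> w \<in> verts k"
  using motzkin_edge by blast

lemma motzkin_disj: "motzkin k d \<Longrightarrow> E1 \<in> d \<Longrightarrow> E2 \<in> d \<Longrightarrow> w \<in> E1 \<Longrightarrow> w \<in> E2 \<Longrightarrow> E1 = E2"
  unfolding motzkin_def by blast

lemma motzkin_noncrossing:
  assumes "motzkin k d" "{a, b} \<in> d" "{c, e} \<in> d"
  shows "\<not> (bpos k a < bpos k c \<and> bpos k c < bpos k b \<and> bpos k b < bpos k e)"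
proof -
  have "noncrossing k d" using assms(1) by (simp add: motzkin_def)
  then show ?thesis
    unfolding noncrossing_def using assms(2,3) by blast
qed

lemma motzkin_edge_neq: "motzkin k d \<Longrightarrow> {a, b} \<in> d \<Longrightarrow> a \<noteq> b"
  using motzkin_edge[of k d "{a, b}"] by (auto simp: doubleton_eq_iff)

lemma motzkin_edge_share: "motzkin k d \<Longrightarrow> {a, b} \<in> d \<Longrightarrow> {b, c} \<in> d \<Longrightarrow> a = c"
proof -
  assume m: "motzkin k d" and ab: "{a, b} \<in> d" and bc: "{b, c} \<in> d"
  have "{a, b} = {b, c}" using motzkin_disj[OF m ab bc, of b] by simp
  then show "a = c" using motzkin_edge_neq[OF m ab] by (metis doubleton_eq_iff)
qed

lemma finite_Mot: "finite (Mot k)"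
proof -
  have "Mot k \<subseteq> Pow (Pow (verts k))"
    unfolding Mot_def using motzkin_verts by blast
  then show ?thesis using finite_verts by (meson finite_Pow_iff finite_subset)
qed

lemma bpos_inj: "u \<in> verts k \<Longrightarrow> v \<in> verts k \<Longrightarrow> bpos k u = bpos k v \<Longrightarrow> u = v"
  by (cases u; cases v) auto

lemma bpos_range: "v \<in> verts k \<Longrightarrow> 1 \<le> bpos k v \<and> bpos k v \<le> 2 * k"
  by (cases v) auto

subsection \<open>Vertical diagrams\<close>

text \<open>A diagram is vertical if each edge joins a top vertex to a bottom vertex. Diagrams spanning
  RP and LP, the generators, and the identity are vertical.\<close>
definition vertical :: "diagram \<Rightarrow> bool" where
  "vertical d \<longleftrightarrow> (\<forall>e\<in>d. \<exists>i j. e = {T i, B j})"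

lemma vertical_edge_cases:
  "vertical d \<Longrightarrow> {a, b} \<in> d \<Longrightarrow> (\<exists>i j. a = T i \<and> b = B j) \<or> (\<exists>i j. a = B j \<and> b = T i)"
  unfolding vertical_def by (fastforce simp: doubleton_eq_iff)

lemma vertical_ext:
  assumes "vertical d" "vertical e" "\<And>i j. {T i, B j} \<in> d \<longleftrightarrow> {T i, B j} \<in> e"
  shows "d = e"
proof (intro set_eqI iffI)
  fix x assume "x \<in> d"
  then obtain i j where "x = {T i, B j}" using assms(1) unfolding vertical_def by blast
  then show "x \<in> e" using assms(3) \<open>x \<in> d\<close> by simp
next
  fix x assume "x \<in> e"
  then obtain i j where "x = {T i, B j}" using assms(2) unfolding vertical_def by blast
  then show "x \<in> d" using assms(3) \<open>x \<in> e\<close> by simp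
qed

lemma motzkin_edge_range:
  "motzkin k d \<Longrightarrow> {T i, B j} \<in> d \<Longrightarrow> 1 \<le> i \<and> i \<le> k \<and> 1 \<le> j \<and> j \<le> k"
  using motzkin_verts[of k d "{T i, B j}" "T i"] motzkin_verts[of k d "{T i, B j}" "B j"] by auto

lemma motzkin_top_unique: "motzkin k d \<Longrightarrow> {T i, B j} \<in> d \<Longrightarrow> {T i, B j'} \<in> d \<Longrightarrow> j = j'"
  using motzkin_disj[of k d "{T i, B j}" "{T i, B j'}" "T i"] by (auto simp: doubleton_eq_iff)

lemma motzkin_bottom_unique: "motzkin k d \<Longrightarrow> {T i, B j} \<in> d \<Longrightarrow> {T i', B j} \<in> d \<Longrightarrow> i = i'"
  using motzkin_disj[of k d "{T i, B j}" "{T i', B j}" "B j"] by (auto simp: doubleton_eq_iff)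

text \<open>Planarity forces the vertical edges of a Motzkin diagram to be order preserving.\<close>
lemma motzkin_vertical_mono:
  assumes m: "motzkin k d" and e1: "{T i1, B j1} \<in> d" and e2: "{T i2, B j2} \<in> d" and "i1 < i2"
  shows "j1 < j2"
proof (rule ccontr)
  assume "\<not> j1 < j2"
  moreover have "j1 \<noteq> j2" using motzkin_bottom_unique[OF m e1] e2 \<open>i1 < i2\<close> by auto
  ultimately have "j2 < j1" by simp
  moreover have "i2 \<le> k" "j1 \<le> k" using motzkin_edge_range[OF m e2] motzkin_edge_range[OF m e1] by auto
  ultimately have "bpos k (T i1) < bpos k (T i2) \<and> bpos k (T i2) < bpos k (B j1) \<and> bpos k (B j1) < bpos k (B j2)"
    using \<open>i1 < i2\<close> by auto
  then show False using motzkin_noncrossing[OF m e1 e2] by blast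
qed

lemma motzkin_vertical_mono_iff:
  assumes "motzkin k d" "{T i1, B j1} \<in> d" "{T i2, B j2} \<in> d"
  shows "i1 < i2 \<longleftrightarrow> j1 < j2"
proof
  show "i1 < i2 \<Longrightarrow> j1 < j2" using motzkin_vertical_mono[OF assms] .
next
  assume "j1 < j2"
  moreover have "i1 \<noteq> i2" using motzkin_top_unique[OF assms(1,2)] assms(3) \<open>j1 < j2\<close> by auto
  ultimately show "i1 < i2" using motzkin_vertical_mono[OF assms(1,3,2)] by (cases "i2 < i1") auto
qed

lemma top_before_bottom:
  assumes "{a, b} = {T i, B j}" "bpos k a < bpos k b" "i \<le> k" "j \<le> k"
  shows "a = T i \<and> b = B j"
proof -
  have "(a = T i \<and> b = B j) \<or> (a = B j \<and> b = T i)" using assms(1) by (simp add: doubleton_eq_iff)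
  moreover have "\<not> (a = B j \<and> b = T i)"
  proof
    assume "a = B j \<and> b = T i"
    then have "2 * k + 1 - j < i" using assms(2) by simp
    then show False using assms(3,4) by arith
  qed
  ultimately show ?thesis by blast
qed

text \<open>Conversely, a vertical diagram on the vertices whose edges are order preserving is a
  Motzkin diagram. This is how all vertical diagrams below are shown to be Motzkin diagrams.\<close>
lemma monotone_vertical_motzkin:
  assumes v: "vertical d"
    and rng_edge: "\<And>i j. {T i, B j} \<in> d \<Longrightarrow> 1 \<le> i \<and> i \<le> k \<and> 1 \<le> j \<and> j \<le> k"
    and order: "\<And>i j i' j'. {T i, B j} \<in> d \<Longrightarrow> {T i', B j'} \<in> d \<Longrightarrow> i < i' \<longleftrightarrow> j < j'"
  shows "motzkin k d"
proof -
  have ie: "\<forall>e\<in>d. is_edge k e"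
  proof
    fix e assume "e \<in> d"
    then obtain i j where e: "e = {T i, B j}" using v unfolding vertical_def by blast
    have "1 \<le> i \<and> i \<le> k \<and> 1 \<le> j \<and> j \<le> k" using rng_edge[of i j] e \<open>e \<in> d\<close> by simp
    then show "is_edge k e" unfolding is_edge_def e by (intro exI[of _ "T i"] exI[of _ "B j"]) simp
  qed
  have dj: "\<forall>e1\<in>d. \<forall>e2\<in>d. e1 \<inter> e2 \<noteq> {} \<longrightarrow> e1 = e2"
  proof (intro ballI impI)
    fix e1 e2 assume e: "e1 \<in> d" "e2 \<in> d" "e1 \<inter> e2 \<noteq> {}"
    obtain i j where e1: "e1 = {T i, B j}" using v e(1) unfolding vertical_def by blast
    obtain i' j' where e2: "e2 = {T i', B j'}" using v e(2) unfolding vertical_def by blast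
    have "i < i' \<longleftrightarrow> j < j'" "i' < i \<longleftrightarrow> j' < j"
      using order[of i j i' j'] order[of i' j' i j] e(1,2) e1 e2 by simp_all
    moreover obtain w where "w \<in> {T i, B j}" "w \<in> {T i', B j'}" using e(3) e1 e2 by blast
    then have "i = i' \<or> j = j'" by auto
    ultimately have "i = i' \<and> j = j'" by auto
    then show "e1 = e2" using e1 e2 by simp
  qed
  have nc: "noncrossing k d" unfolding noncrossing_def
  proof (intro ballI allI impI notI)
    fix e1 e2 a b c e
    assume e: "e1 \<in> d" "e2 \<in> d" "e1 = {a, b} \<and> e2 = {c, e}"
      and cr: "bpos k a < bpos k c \<and> bpos k c < bpos k b \<and> bpos k b < bpos k e"
    obtain i j where e1: "e1 = {T i, B j}" using v e(1) unfolding vertical_def by blast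
    obtain i' j' where e2: "e2 = {T i', B j'}" using v e(2) unfolding vertical_def by blast
    have rng: "i \<le> k" "j \<le> k" "i' \<le> k" "j' \<le> k" using rng_edge[of i j] rng_edge[of i' j'] e(1,2) e1 e2 by auto
    have ab: "{a, b} = {T i, B j}" and ce: "{c, e} = {T i', B j'}" using e(3) e1 e2 by simp_all
    \<comment> \<open>on each edge the top endpoint comes first along the boundary\<close>
    have "a = T i \<and> b = B j" using top_before_bottom[OF ab _ rng(1,2)] cr by simp
    moreover have "c = T i' \<and> e = B j'" using top_before_bottom[OF ce _ rng(3,4)] cr by simp
    ultimately have "i < i'" "j' < j" using cr rng by auto
    then show False using order[of i j i' j'] e(1,2) e1 e2 by simp
  qed
  show ?thesis unfolding motzkin_def using ie dj nc by blast
qed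

subsection \<open>Relabelling a diagram along a partial bijection\<close>

text \<open>For a relation R between vertices, pull R d joins two vertices when their R-images are
  joined in d. Composition with a vertical diagram is of this form.\<close>
definition pull :: "(vtx \<Rightarrow> vtx \<Rightarrow> bool) \<Rightarrow> diagram \<Rightarrow> diagram" where
  "pull R d = {{u, v} | u v. u \<noteq> v \<and> (\<exists>a b. R u a \<and> R v b \<and> {a, b} \<in> d)}"

lemma pullI: "u \<noteq> v \<Longrightarrow> R u a \<Longrightarrow> R v b \<Longrightarrow> {a, b} \<in> d \<Longrightarrow> {u, v} \<in> pull R d"
  unfolding pull_def by blast

lemma pullE:
  assumes "e \<in> pull R d"
  obtains u v a b where "e = {u, v}" "u \<noteq> v" "R u a" "R v b" "{a, b} \<in> d"
  using assms unfolding pull_def by blast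

definition rel_pre :: "(vtx \<Rightarrow> vtx \<Rightarrow> bool) \<Rightarrow> vtx set \<Rightarrow> vtx set" where
  "rel_pre R E = {x. \<exists>y\<in>E. R x y}"

lemma pull_eq_pre:
  assumes m: "motzkin k d"
    and F: "\<And>x a b. R x a \<Longrightarrow> R x b \<Longrightarrow> a = b"
    and I: "\<And>x y a. R x a \<Longrightarrow> R y a \<Longrightarrow> x = y"
  shows "pull R d = {rel_pre R E | E. E \<in> d \<and> (\<forall>y\<in>E. \<exists>x. R x y)}"
proof (intro set_eqI iffI)
  fix e assume "e \<in> pull R d"
  then obtain u v a b where h: "e = {u, v}" "R u a" "R v b" "{a, b} \<in> d"
    by (rule pullE)
  have "rel_pre R {a, b} = {u, v}" unfolding rel_pre_def using h(2,3) I by blast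
  moreover have "\<forall>y\<in>{a, b}. \<exists>x. R x y" using h by blast
  ultimately show "e \<in> {rel_pre R E | E. E \<in> d \<and> (\<forall>y\<in>E. \<exists>x. R x y)}" using h by blast
next
  fix e assume "e \<in> {rel_pre R E | E. E \<in> d \<and> (\<forall>y\<in>E. \<exists>x. R x y)}"
  then obtain E where E: "e = rel_pre R E" "E \<in> d" "\<forall>y\<in>E. \<exists>x. R x y" by blast
  obtain a b where ab: "E = {a, b}" "a \<noteq> b" using motzkin_edge[OF m E(2)] by blast
  obtain u v where uv: "R u a" "R v b" using E(3) ab by blast
  have "u \<noteq> v" using F uv ab(2) by blast
  moreover have "e = {u, v}" unfolding E(1) rel_pre_def ab(1) using uv I by blast
  ultimately show "e \<in> pull R d" using uv E(2) ab(1) by (auto intro: pullI)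
qed

lemma pull_edge_pre:
  assumes m: "motzkin k d"
    and F: "\<And>x a b. R x a \<Longrightarrow> R x b \<Longrightarrow> a = b"
    and I: "\<And>x y a. R x a \<Longrightarrow> R y a \<Longrightarrow> x = y"
    and e: "e \<in> pull R d"
  shows "\<exists>E\<in>d. e = rel_pre R E"
proof -
  have "e \<in> {rel_pre R E | E. E \<in> d \<and> (\<forall>y\<in>E. \<exists>x. R x y)}"
    using e pull_eq_pre[OF m F I] by simp
  then show ?thesis by blast
qed

lemma rel_pre_mem:
  assumes m: "motzkin k d" and V: "\<And>x a. R x a \<Longrightarrow> a \<in> verts k \<Longrightarrow> x \<in> verts k"
    and "E \<in> d" "w \<in> rel_pre R E"
  shows "\<exists>y. R w y \<and> y \<in> E \<and> y \<in> verts k \<and> w \<in> verts k"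
proof -
  obtain y where "y \<in> E" "R w y" using assms(4) unfolding rel_pre_def by blast
  moreover have "y \<in> verts k" using motzkin_verts[OF m assms(3) \<open>y \<in> E\<close>] .
  ultimately show ?thesis using V by blast
qed

lemma two_elem: "E = {p, q} \<Longrightarrow> a \<in> E \<Longrightarrow> b \<in> E \<Longrightarrow> a \<noteq> b \<Longrightarrow> E = {a, b}"
  by auto

lemma motzkin_pull:
  assumes m: "motzkin k d"
    and F: "\<And>x a b. R x a \<Longrightarrow> R x b \<Longrightarrow> a = b"
    and I: "\<And>x y a. R x a \<Longrightarrow> R y a \<Longrightarrow> x = y"
    and V: "\<And>x a. R x a \<Longrightarrow> a \<in> verts k \<Longrightarrow> x \<in> verts k"
    and O: "\<And>x y a b. R x a \<Longrightarrow> R y b \<Longrightarrow> x \<in> verts k \<Longrightarrow> y \<in> verts k \<Longrightarrow> a \<in> verts k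
             \<Longrightarrow> b \<in> verts k \<Longrightarrow> bpos k x < bpos k y \<Longrightarrow> bpos k a < bpos k b"
  shows "motzkin k (pull R d)"
proof -
  have D: "\<exists>E\<in>d. e = rel_pre R E" if "e \<in> pull R d" for e
    by (rule pull_edge_pre[OF m _ _ that]) (use F I in blast)+
  have mem: "\<exists>y. R w y \<and> y \<in> E \<and> y \<in> verts k \<and> w \<in> verts k"
    if "E \<in> d" "w \<in> rel_pre R E" for w E
    by (rule rel_pre_mem[OF m _ that]) (use V in blast)
  have ie: "\<forall>e\<in>pull R d. is_edge k e"
  proof
    fix e assume "e \<in> pull R d"
    then obtain u v a b where h: "e = {u, v}" "u \<noteq> v" "R u a" "R v b" "{a, b} \<in> d"
      by (rule pullE)
    have "a \<in> verts k" "b \<in> verts k" using motzkin_verts[OF m h(5)] by auto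
    then show "is_edge k e" unfolding is_edge_def using h V by blast
  qed
  have dj: "\<forall>e1\<in>pull R d. \<forall>e2\<in>pull R d. e1 \<inter> e2 \<noteq> {} \<longrightarrow> e1 = e2"
  proof (intro ballI impI)
    fix e1 e2 assume e: "e1 \<in> pull R d" "e2 \<in> pull R d" "e1 \<inter> e2 \<noteq> {}"
    obtain E1 where E1: "e1 = rel_pre R E1" "E1 \<in> d" using D[OF e(1)] by blast
    obtain E2 where E2: "e2 = rel_pre R E2" "E2 \<in> d" using D[OF e(2)] by blast
    obtain w where w: "w \<in> e1" "w \<in> e2" using e(3) by blast
    obtain y1 where y1: "R w y1" "y1 \<in> E1" using mem[OF E1(2)] w(1) E1(1) by blast
    obtain y2 where y2: "R w y2" "y2 \<in> E2" using mem[OF E2(2)] w(2) E2(1) by blast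
    have "y1 = y2" using F y1(1) y2(1) .
    then have "E1 = E2" using motzkin_disj[OF m E1(2) E2(2) y1(2)] y2(2) by simp
    then show "e1 = e2" using E1 E2 by simp
  qed
  have nc: "noncrossing k (pull R d)" unfolding noncrossing_def
  proof (intro ballI allI impI notI)
    fix e1 e2 a b c e
    assume e: "e1 \<in> pull R d" "e2 \<in> pull R d" "e1 = {a, b} \<and> e2 = {c, e}"
      and cr: "bpos k a < bpos k c \<and> bpos k c < bpos k b \<and> bpos k b < bpos k e"
    obtain E1 where E1: "e1 = rel_pre R E1" "E1 \<in> d" using D[OF e(1)] by blast
    obtain E2 where E2: "e2 = rel_pre R E2" "E2 \<in> d" using D[OF e(2)] by blast
    obtain a' where a': "R a a'" "a' \<in> E1" "a' \<in> verts k" "a \<in> verts k"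
      using mem[OF E1(2), of a] E1(1) e(3) by blast
    obtain b' where b': "R b b'" "b' \<in> E1" "b' \<in> verts k" "b \<in> verts k"
      using mem[OF E1(2), of b] E1(1) e(3) by blast
    obtain c' where c': "R c c'" "c' \<in> E2" "c' \<in> verts k" "c \<in> verts k"
      using mem[OF E2(2), of c] E2(1) e(3) by blast
    obtain e' where e': "R e e'" "e' \<in> E2" "e' \<in> verts k" "e \<in> verts k"
      using mem[OF E2(2), of e] E2(1) e(3) by blast
    have "a \<noteq> b" "c \<noteq> e" using cr by auto
    then have "a' \<noteq> b'" "c' \<noteq> e'" using I a' b' c' e' by blast+
    obtain p q where "E1 = {p, q}" using motzkin_edge[OF m E1(2)] by blast
    then have E1': "E1 = {a', b'}" using two_elem a'(2) b'(2) \<open>a' \<noteq> b'\<close> by blast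
    obtain p q where "E2 = {p, q}" using motzkin_edge[OF m E2(2)] by blast
    then have E2': "E2 = {c', e'}" using two_elem c'(2) e'(2) \<open>c' \<noteq> e'\<close> by blast
    have "bpos k a' < bpos k c'" using O[OF a'(1) c'(1)] a' c' cr by blast
    moreover have "bpos k c' < bpos k b'" using O[OF c'(1) b'(1)] b' c' cr by blast
    moreover have "bpos k b' < bpos k e'" using O[OF b'(1) e'(1)] b' e' cr by blast
    ultimately show False using motzkin_noncrossing[OF m] E1(2) E2(2) E1' E2' by blast
  qed
  show ?thesis unfolding motzkin_def using ie dj nc by blast
qed

lemma pull_pull:
  assumes I: "\<And>x y a. R x a \<Longrightarrow> R y a \<Longrightarrow> x = y"
  shows "pull R (pull S d) = pull (R OO S) d"
proof (intro set_eqI iffI)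
  fix e assume "e \<in> pull R (pull S d)"
  then obtain u v a b where h: "e = {u, v}" "u \<noteq> v" "R u a" "R v b" "{a, b} \<in> pull S d"
    by (rule pullE)
  from h(5) obtain a' b' c c' where h': "{a, b} = {a', b'}" "S a' c" "S b' c'" "{c, c'} \<in> d"
    by (rule pullE)
  from h'(1) have "(a = a' \<and> b = b') \<or> (a = b' \<and> b = a')" by (simp add: doubleton_eq_iff)
  then show "e \<in> pull (R OO S) d"
  proof
    assume "a = a' \<and> b = b'"
    then have "(R OO S) u c" "(R OO S) v c'" using h(3,4) h'(2,3) by auto
    with h(2) h'(4) show ?thesis unfolding h(1) by (intro pullI)
  next
    assume "a = b' \<and> b = a'"
    then have "(R OO S) u c'" "(R OO S) v c" using h(3,4) h'(2,3) by auto
    moreover have "{c', c} \<in> d" using h'(4) by (simp add: insert_commute)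
    ultimately show ?thesis unfolding h(1) using h(2) by (intro pullI)
  qed
next
  fix e assume "e \<in> pull (R OO S) d"
  then obtain u v c c' where h: "e = {u, v}" "u \<noteq> v" "(R OO S) u c" "(R OO S) v c'" "{c, c'} \<in> d"
    by (rule pullE)
  obtain a b where ab: "R u a" "S a c" "R v b" "S b c'" using h(3,4) by blast
  have "a \<noteq> b" using I h(2) ab(1,3) by blast
  then have "{a, b} \<in> pull S d" using ab(2,4) h(5) by (rule pullI)
  with h(2) ab(1,3) show "e \<in> pull R (pull S d)" unfolding h(1) by (rule pullI)
qed

lemma pull_Un: "pull R (d1 \<union> d2) = pull R d1 \<union> pull R d2"
proof (intro set_eqI iffI)
  fix e assume "e \<in> pull R (d1 \<union> d2)"
  then obtain u v a b where h: "e = {u, v}" "u \<noteq> v" "R u a" "R v b" "{a, b} \<in> d1 \<union> d2"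
    by (rule pullE)
  then have "{a, b} \<in> d1 \<or> {a, b} \<in> d2" by blast
  then show "e \<in> pull R d1 \<union> pull R d2"
  proof
    assume "{a, b} \<in> d1"
    with h(2-4) have "{u, v} \<in> pull R d1" by (rule pullI)
    then show ?thesis unfolding h(1) by blast
  next
    assume "{a, b} \<in> d2"
    with h(2-4) have "{u, v} \<in> pull R d2" by (rule pullI)
    then show ?thesis unfolding h(1) by blast
  qed
next
  fix e assume "e \<in> pull R d1 \<union> pull R d2"
  then consider "e \<in> pull R d1" | "e \<in> pull R d2" by blast
  then show "e \<in> pull R (d1 \<union> d2)"
  proof cases
    case 1
    then obtain u v a b where h: "e = {u, v}" "u \<noteq> v" "R u a" "R v b" "{a, b} \<in> d1" by (rule pullE)
    then have "{a, b} \<in> d1 \<union> d2" by blast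
    with h(2-4) show ?thesis unfolding h(1) by (rule pullI)
  next
    case 2
    then obtain u v a b where h: "e = {u, v}" "u \<noteq> v" "R u a" "R v b" "{a, b} \<in> d2" by (rule pullE)
    then have "{a, b} \<in> d1 \<union> d2" by blast
    with h(2-4) show ?thesis unfolding h(1) by (rule pullI)
  qed
qed

lemma pull_restricted_id:
  assumes m: "motzkin k d" and P: "\<And>e v. e \<in> d \<Longrightarrow> v \<in> e \<Longrightarrow> P v"
  shows "pull (\<lambda>x a. P a \<and> x = a) d = d"
proof (intro set_eqI iffI)
  fix e assume "e \<in> pull (\<lambda>x a. P a \<and> x = a) d"
  then obtain u v a b where "e = {u, v}" "P a \<and> u = a" "P b \<and> v = b" "{a, b} \<in> d"
    by (rule pullE)
  then show "e \<in> d" by simp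
next
  fix e assume e: "e \<in> d"
  then obtain u v where uv: "e = {u, v}" "u \<noteq> v" using motzkin_edge[OF m] by blast
  have "P u" "P v" using P e uv(1) by auto
  with uv(2) have "{u, v} \<in> pull (\<lambda>x a. P a \<and> x = a) d"
    using e uv(1) by (intro pullI[of u v _ u v]) simp_all
  then show "e \<in> pull (\<lambda>x a. P a \<and> x = a) d" using uv(1) by simp
qed

text \<open>When the upper factor is vertical, a vertex of the composite is routed to a vertex of the
  lower factor: a top vertex follows its vertical edge down to the middle row, a bottom vertex
  stays where it is.\<close>
definition via :: "diagram \<Rightarrow> vtx \<Rightarrow> vtx \<Rightarrow> bool" where
  "via d u w \<longleftrightarrow> (case u of T i \<Rightarrow> \<exists>j. w = T j \<and> {T i, B j} \<in> d | B l \<Rightarrow> w = B l)"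

lemma via_T [simp]: "via d (T i) w \<longleftrightarrow> (\<exists>j. w = T j \<and> {T i, B j} \<in> d)"
  and via_B [simp]: "via d (B l) w \<longleftrightarrow> w = B l"
  by (simp_all add: via_def)

lemma via_to_T [simp]: "via d u (T j) \<longleftrightarrow> (\<exists>i. u = T i \<and> {T i, B j} \<in> d)"
  and via_to_B [simp]: "via d u (B l) \<longleftrightarrow> u = B l"
  by (cases u; auto)+

lemma via_func: "motzkin k d \<Longrightarrow> via d u a \<Longrightarrow> via d u b \<Longrightarrow> a = b"
  by (cases u) (auto dest: motzkin_top_unique)

lemma via_inj: "motzkin k d \<Longrightarrow> via d u a \<Longrightarrow> via d v a \<Longrightarrow> u = v"
  by (cases a) (auto dest: motzkin_bottom_unique)

text \<open>The vertex of the lower factor represented by a vertex of the stacked graph.\<close>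
definition mid_rep :: "diagram \<Rightarrow> vtx3 \<Rightarrow> vtx \<Rightarrow> bool" where
  "mid_rep d p w \<longleftrightarrow> (case p of Up i \<Rightarrow> via d (T i) w | Mid j \<Rightarrow> w = T j | Dn l \<Rightarrow> w = B l)"

lemma mid_rep_emb2: "mid_rep d (emb2 a) a"
  by (cases a) (auto simp: mid_rep_def)

lemma mid_rep_embo: "mid_rep d (embo u) a \<longleftrightarrow> via d u a"
  by (cases u) (auto simp: mid_rep_def)

lemma mid_rep_func: "motzkin k d \<Longrightarrow> mid_rep d p a \<Longrightarrow> mid_rep d p b \<Longrightarrow> a = b"
  by (cases p) (auto simp: mid_rep_def dest: motzkin_top_unique)

lemma stack_adjI1: "{a, b} \<in> d1 \<Longrightarrow> a \<noteq> b \<Longrightarrow> (emb1 a, emb1 b) \<in> stack_adj d1 d2"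
  and stack_adjI2: "{a, b} \<in> d2 \<Longrightarrow> a \<noteq> b \<Longrightarrow> (emb2 a, emb2 b) \<in> stack_adj d1 d2"
  unfolding stack_adj_def by blast+

lemma stack_adj_mid_rep:
  assumes v: "vertical d1" and pq: "(p, q) \<in> stack_adj d1 d2"
  shows "\<exists>a b. mid_rep d1 p a \<and> mid_rep d1 q b \<and> (a = b \<or> {a, b} \<in> d2)"
  using pq unfolding stack_adj_def
proof (elim UnE CollectE exE conjE)
  fix a b assume "(p, q) = (emb2 a, emb2 b)" "{a, b} \<in> d2"
  then show ?thesis using mid_rep_emb2 by blast
next
  fix a b assume e: "(p, q) = (emb1 a, emb1 b)" "{a, b} \<in> d1"
  from vertical_edge_cases[OF v e(2)] show ?thesis
  proof
    assume "\<exists>i j. a = T i \<and> b = B j"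
    then obtain i j where "a = T i" "b = B j" by blast
    then show ?thesis using e by (auto simp: mid_rep_def)
  next
    assume "\<exists>i j. a = B j \<and> b = T i"
    then obtain i j where "a = B j" "b = T i" by blast
    then show ?thesis using e by (auto simp: mid_rep_def insert_commute)
  qed
qed

text \<open>Hence a path in the stacked graph crosses at most one edge of the lower factor.\<close>
lemma stack_conn_mid_rep:
  assumes m1: "motzkin k d1" "vertical d1" and m2: "motzkin k d2"
    and pq: "(p, q) \<in> stack_conn d1 d2"
  shows "p = q \<or> (\<exists>a b. mid_rep d1 p a \<and> mid_rep d1 q b \<and> (a = b \<or> {a, b} \<in> d2))"
  using pq unfolding stack_conn_def
proof (induction rule: rtrancl_induct)
  case base then show ?case by simp
next
  case (step q r)
  obtain b c where bc: "mid_rep d1 q b" "mid_rep d1 r c" "b = c \<or> {b, c} \<in> d2"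
    using stack_adj_mid_rep[OF m1(2) step(2)] by blast
  show ?case using step(3)
  proof
    assume "p = q" then show ?thesis using bc by blast
  next
    assume "\<exists>a b. mid_rep d1 p a \<and> mid_rep d1 q b \<and> (a = b \<or> {a, b} \<in> d2)"
    then obtain a b' where ab: "mid_rep d1 p a" "mid_rep d1 q b'" "a = b' \<or> {a, b'} \<in> d2" by blast
    have "b' = b" using mid_rep_func[OF m1(1) ab(2) bc(1)] .
    then have "a = c \<or> {a, c} \<in> d2" using ab(3) bc(3) motzkin_edge_share[OF m2] by blast
    then show ?thesis using ab(1) bc(2) by blast
  qed
qed

lemma via_path:
  assumes "via d1 u a"
  shows "(embo u, emb2 a) \<in> stack_conn d1 d2 \<and> (emb2 a, embo u) \<in> stack_conn d1 d2"
proof (cases u)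
  case (B l) then show ?thesis using assms by (simp add: stack_conn_def)
next
  case (T i)
  then obtain j where j: "a = T j" "{T i, B j} \<in> d1" using assms by auto
  have "(emb1 (B j), emb1 (T i)) \<in> stack_adj d1 d2"
    using j(2) by (intro stack_adjI1) (auto simp: insert_commute)
  moreover have "(emb1 (T i), emb1 (B j)) \<in> stack_adj d1 d2"
    using j(2) by (intro stack_adjI1) auto
  ultimately show ?thesis using T j by (auto simp: stack_conn_def)
qed

lemma embo_inj: "embo u = embo v \<Longrightarrow> u = v"
  by (cases u; cases v) auto

theorem compose_vertical_left:
  assumes m1: "motzkin k d1" "vertical d1" and m2: "motzkin k d2"
  shows "compose d1 d2 = pull (via d1) d2"
proof -
  have eq: "(embo u, embo v) \<in> stack_conn d1 d2 \<longleftrightarrow> (\<exists>a b. via d1 u a \<and> via d1 v b \<and> {a, b} \<in> d2)"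
    if "u \<noteq> v" for u v
  proof
    assume c: "(embo u, embo v) \<in> stack_conn d1 d2"
    from stack_conn_mid_rep[OF m1 m2 c] that embo_inj
    obtain a b where ab: "via d1 u a" "via d1 v b" "a = b \<or> {a, b} \<in> d2"
      unfolding mid_rep_embo by blast
    have "a \<noteq> b" using via_inj[OF m1(1) ab(1)] ab(2) that by blast
    then show "\<exists>a b. via d1 u a \<and> via d1 v b \<and> {a, b} \<in> d2" using ab by blast
  next
    assume "\<exists>a b. via d1 u a \<and> via d1 v b \<and> {a, b} \<in> d2"
    then obtain a b where ab: "via d1 u a" "via d1 v b" "{a, b} \<in> d2" by blast
    have "(emb2 a, emb2 b) \<in> stack_adj d1 d2"
      using ab(3) motzkin_edge_neq[OF m2 ab(3)] by (rule stack_adjI2)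
    then have "(emb2 a, emb2 b) \<in> stack_conn d1 d2" by (simp add: stack_conn_def)
    moreover have "(embo u, emb2 a) \<in> stack_conn d1 d2" using via_path[OF ab(1)] by blast
    moreover have "(emb2 b, embo v) \<in> stack_conn d1 d2" using via_path[OF ab(2)] by blast
    ultimately show "(embo u, embo v) \<in> stack_conn d1 d2"
      unfolding stack_conn_def by (meson rtrancl_trans)
  qed
  show ?thesis unfolding compose_def pull_def
  proof (rule Collect_cong)
    fix x
    show "(\<exists>u v. x = {u, v} \<and> u \<noteq> v \<and> (embo u, embo v) \<in> stack_conn d1 d2) \<longleftrightarrow>
          (\<exists>u v. x = {u, v} \<and> u \<noteq> v \<and> (\<exists>a b. via d1 u a \<and> via d1 v b \<and> {a, b} \<in> d2))"
      using eq by (metis (no_types, lifting))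
  qed
qed

lemma motzkin_compose_vertical_left:
  assumes m1: "motzkin k d1" "vertical d1" and m2: "motzkin k d2"
  shows "motzkin k (compose d1 d2)"
  unfolding compose_vertical_left[OF m1 m2]
proof (rule motzkin_pull[OF m2])
  show "\<And>x a b. via d1 x a \<Longrightarrow> via d1 x b \<Longrightarrow> a = b" using via_func[OF m1(1)] by blast
  show "\<And>x y a. via d1 x a \<Longrightarrow> via d1 y a \<Longrightarrow> x = y" using via_inj[OF m1(1)] by blast
  show "x \<in> verts k" if h: "via d1 x a" "a \<in> verts k" for x a
  proof (cases x)
    case (B i) then show ?thesis using h by simp
  next
    case (T i) then obtain j where "{T i, B j} \<in> d1" using h by auto
    then show ?thesis using motzkin_edge_range[OF m1(1)] T by simp
  qed
  show "bpos k a < bpos k b"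
    if h: "via d1 x a" "via d1 y b" "x \<in> verts k" "y \<in> verts k" "a \<in> verts k" "b \<in> verts k"
      "bpos k x < bpos k y" for x y a b
  proof (cases x)
    case (B l) then show ?thesis using h by (cases y) auto
  next
    case (T i1)
    then obtain j1 where j1: "a = T j1" "{T i1, B j1} \<in> d1" using h by auto
    show ?thesis
    proof (cases y)
      case (B l) then show ?thesis using h j1 by auto
    next
      case (T i2) then obtain j2 where j2: "b = T j2" "{T i2, B j2} \<in> d1" using h by auto
      have "i1 < i2" using h(7) \<open>x = T i1\<close> T by auto
      then show ?thesis using motzkin_vertical_mono[OF m1(1) j1(2) j2(2)] j1 j2 by auto
    qed
  qed
qed

subsection \<open>The top-bottom flip\<close>

text \<open>Reflecting diagrams in a horizontal line reverses the order of composition. This transfers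
  the description of composition with a vertical diagram from the left factor to the right one.\<close>
fun flipv :: "vtx \<Rightarrow> vtx" where
  "flipv (T i) = B i"
| "flipv (B i) = T i"

fun flip3 :: "vtx3 \<Rightarrow> vtx3" where
  "flip3 (Up i) = Dn i"
| "flip3 (Mid i) = Mid i"
| "flip3 (Dn i) = Up i"

definition flip :: "diagram \<Rightarrow> diagram" where
  "flip d = image flipv ` d"

lemma flipv_flipv [simp]: "flipv (flipv v) = v"
  by (cases v) auto

lemma flip3_flip3 [simp]: "flip3 (flip3 p) = p"
  by (cases p) auto

lemma flipv_eq_iff [simp]: "flipv a = flipv b \<longleftrightarrow> a = b"
  by (metis flipv_flipv)

lemma image_flipv_flipv [simp]: "flipv ` flipv ` E = E"
  by (simp add: image_image)

lemma flip_flip [simp]: "flip (flip d) = d"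
  by (simp add: flip_def image_image)

lemma mem_flip: "{a, b} \<in> flip d \<longleftrightarrow> {flipv a, flipv b} \<in> d"
proof
  assume "{a, b} \<in> flip d"
  then obtain E where "E \<in> d" "{a, b} = flipv ` E" unfolding flip_def by blast
  then have "flipv ` {a, b} = E" by simp
  then show "{flipv a, flipv b} \<in> d" using \<open>E \<in> d\<close> by simp
next
  assume "{flipv a, flipv b} \<in> d"
  then have "flipv ` {flipv a, flipv b} \<in> flip d" unfolding flip_def by blast
  then show "{a, b} \<in> flip d" by simp
qed

lemma emb_flipv: "emb1 (flipv a) = flip3 (emb2 a)" "emb2 (flipv a) = flip3 (emb1 a)"
  "embo (flipv a) = flip3 (embo a)"
  by (cases a; simp)+

lemma stack_adj_flip:
  assumes "(p, q) \<in> stack_adj d1 d2"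
  shows "(flip3 p, flip3 q) \<in> stack_adj (flip d2) (flip d1)"
  using assms unfolding stack_adj_def
proof (elim UnE CollectE exE conjE)
  fix a b assume "(p, q) = (emb1 a, emb1 b)" "{a, b} \<in> d1" "a \<noteq> b"
  moreover have "{flipv a, flipv b} \<in> flip d1" using \<open>{a, b} \<in> d1\<close> by (simp add: mem_flip)
  ultimately show "(flip3 p, flip3 q) \<in> {(emb1 a, emb1 b) |a b. {a, b} \<in> flip d2 \<and> a \<noteq> b} \<union>
      {(emb2 a, emb2 b) |a b. {a, b} \<in> flip d1 \<and> a \<noteq> b}"
    by (metis (mono_tags, lifting) UnI2 emb_flipv(2) flipv_flipv mem_Collect_eq prod.inject)
next
  fix a b assume "(p, q) = (emb2 a, emb2 b)" "{a, b} \<in> d2" "a \<noteq> b"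
  moreover have "{flipv a, flipv b} \<in> flip d2" using \<open>{a, b} \<in> d2\<close> by (simp add: mem_flip)
  ultimately show "(flip3 p, flip3 q) \<in> {(emb1 a, emb1 b) |a b. {a, b} \<in> flip d2 \<and> a \<noteq> b} \<union>
      {(emb2 a, emb2 b) |a b. {a, b} \<in> flip d1 \<and> a \<noteq> b}"
    by (metis (mono_tags, lifting) UnI1 emb_flipv(1) flipv_flipv mem_Collect_eq prod.inject)
qed

lemma stack_conn_flip:
  "(p, q) \<in> stack_conn d1 d2 \<Longrightarrow> (flip3 p, flip3 q) \<in> stack_conn (flip d2) (flip d1)"
  unfolding stack_conn_def
proof (induction rule: rtrancl_induct)
  case (step q r)
  then show ?case using stack_adj_flip[OF step(2)] by (meson rtrancl.rtrancl_into_rtrancl)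
qed simp

lemma stack_conn_flip_iff:
  "(flip3 p, flip3 q) \<in> stack_conn (flip d2) (flip d1) \<longleftrightarrow> (p, q) \<in> stack_conn d1 d2"
  using stack_conn_flip[of p q d1 d2] stack_conn_flip[of "flip3 p" "flip3 q" "flip d2" "flip d1"]
  by auto

theorem compose_flip: "compose (flip d2) (flip d1) = flip (compose d1 d2)"
proof (intro set_eqI iffI)
  fix x assume "x \<in> compose (flip d2) (flip d1)"
  then obtain u v where h: "x = {u, v}" "u \<noteq> v" "(embo u, embo v) \<in> stack_conn (flip d2) (flip d1)"
    unfolding compose_def by blast
  then have "(embo (flipv u), embo (flipv v)) \<in> stack_conn d1 d2"
    using stack_conn_flip_iff[of "embo (flipv u)" "embo (flipv v)"] by (simp add: emb_flipv)
  moreover have "flipv u \<noteq> flipv v" using h(2) by (metis flipv_flipv)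
  ultimately have "{flipv u, flipv v} \<in> compose d1 d2" unfolding compose_def by blast
  then show "x \<in> flip (compose d1 d2)" unfolding h(1) mem_flip .
next
  fix x assume "x \<in> flip (compose d1 d2)"
  then obtain E where E: "E \<in> compose d1 d2" "x = flipv ` E" unfolding flip_def by blast
  then obtain u v where h: "E = {u, v}" "u \<noteq> v" "(embo u, embo v) \<in> stack_conn d1 d2"
    unfolding compose_def by blast
  then have "(embo (flipv u), embo (flipv v)) \<in> stack_conn (flip d2) (flip d1)"
    using stack_conn_flip by (simp add: emb_flipv)
  moreover have "flipv u \<noteq> flipv v" using h(2) by (metis flipv_flipv)
  ultimately have "{flipv u, flipv v} \<in> compose (flip d2) (flip d1)" unfolding compose_def by blast
  then show "x \<in> compose (flip d2) (flip d1)" using E(2) h(1) by simp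
qed

lemma vertical_flip:
  assumes "vertical d"
  shows "vertical (flip d)"
  unfolding vertical_def
proof
  fix e assume "e \<in> flip d"
  then obtain E where "E \<in> d" "e = flipv ` E" unfolding flip_def by blast
  moreover obtain i j where "E = {T i, B j}" using assms \<open>E \<in> d\<close> unfolding vertical_def by blast
  ultimately have "e = {T j, B i}" by auto
  then show "\<exists>i j. e = {T i, B j}" by blast
qed

lemma flipv_verts [simp]: "flipv v \<in> verts k \<longleftrightarrow> v \<in> verts k"
  by (cases v) auto

lemma bpos_flipv: "v \<in> verts k \<Longrightarrow> bpos k (flipv v) = 2 * k + 1 - bpos k v"
  by (cases v) auto

lemma motzkin_flip:
  assumes m: "motzkin k d"
  shows "motzkin k (flip d)"
proof -
  have ie: "is_edge k e" if he: "e \<in> flip d" for e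
  proof -
    obtain E where "E \<in> d" "e = flipv ` E" using he unfolding flip_def by blast
    moreover obtain u v where "E = {u, v}" "u \<noteq> v" "u \<in> verts k" "v \<in> verts k"
      using motzkin_edge[OF m \<open>E \<in> d\<close>] by blast
    ultimately show ?thesis unfolding is_edge_def
      by (intro exI[of _ "flipv u"] exI[of _ "flipv v"]) (auto dest: arg_cong[of _ _ flipv])
  qed
  have dj: "e1 = e2" if h: "e1 \<in> flip d" "e2 \<in> flip d" "e1 \<inter> e2 \<noteq> {}" for e1 e2
  proof -
    obtain E1 E2 where E: "E1 \<in> d" "e1 = flipv ` E1" "E2 \<in> d" "e2 = flipv ` E2"
      using h(1,2) unfolding flip_def by blast
    then obtain w where "w \<in> E1" "w \<in> E2" using h(3) by auto
    then have "E1 = E2" using motzkin_disj[OF m E(1,3)] by blast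
    then show ?thesis using E(2,4) by simp
  qed
  have nc: "noncrossing k (flip d)" unfolding noncrossing_def
  proof (intro ballI allI impI notI)
    fix e1 e2 a b c e
    assume e: "e1 \<in> flip d" "e2 \<in> flip d" "e1 = {a, b} \<and> e2 = {c, e}"
      and cr: "bpos k a < bpos k c \<and> bpos k c < bpos k b \<and> bpos k b < bpos k e"
    have ab: "{flipv b, flipv a} \<in> d" and ce: "{flipv e, flipv c} \<in> d"
      using e by (simp_all add: mem_flip insert_commute)
    have vs: "a \<in> verts k" "b \<in> verts k" "c \<in> verts k" "e \<in> verts k"
      using motzkin_verts[OF m ab, of "flipv a"] motzkin_verts[OF m ab, of "flipv b"]
        motzkin_verts[OF m ce, of "flipv c"] motzkin_verts[OF m ce, of "flipv e"] by simp_all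
    have "bpos k e \<le> 2 * k" using bpos_range[OF vs(4)] by simp
    \<comment> \<open>the flip reverses positions, so the flipped edges cross as well\<close>
    then have "bpos k (flipv e) < bpos k (flipv b) \<and> bpos k (flipv b) < bpos k (flipv c)
        \<and> bpos k (flipv c) < bpos k (flipv a)"
      using cr by (simp add: bpos_flipv vs) linarith
    then show False using motzkin_noncrossing[OF m ce ab] by blast
  qed
  show ?thesis unfolding motzkin_def using ie dj nc by blast
qed

lemma flip_pull: "flip (pull R d) = pull (\<lambda>u a. R (flipv u) (flipv a)) (flip d)"
proof (intro set_eqI iffI)
  fix x assume "x \<in> flip (pull R d)"
  then obtain E where "E \<in> pull R d" "x = flipv ` E" unfolding flip_def by blast
  then obtain u v a b where h: "x = {flipv u, flipv v}" "u \<noteq> v" "R u a" "R v b" "{a, b} \<in> d"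
    by (auto elim!: pullE)
  have "{flipv a, flipv b} \<in> flip d" using h(5) by (simp add: mem_flip)
  with h(2-4) show "x \<in> pull (\<lambda>u a. R (flipv u) (flipv a)) (flip d)"
    unfolding h(1) by (intro pullI) simp_all
next
  fix x assume "x \<in> pull (\<lambda>u a. R (flipv u) (flipv a)) (flip d)"
  then obtain u v a b where h: "x = {u, v}" "u \<noteq> v" "R (flipv u) (flipv a)" "R (flipv v) (flipv b)"
    "{a, b} \<in> flip d" by (rule pullE)
  have "{flipv a, flipv b} \<in> d" using h(5) by (simp add: mem_flip)
  with h(2-4) have "{flipv u, flipv v} \<in> pull R d" by (intro pullI) simp_all
  then show "x \<in> flip (pull R d)" unfolding h(1) mem_flip .
qed

text \<open>Mirror image of via: when the lower factor is vertical, a bottom vertex follows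
  its vertical edge up to the middle row and a top vertex stays.\<close>
definition via_below :: "diagram \<Rightarrow> vtx \<Rightarrow> vtx \<Rightarrow> bool" where
  "via_below d u w \<longleftrightarrow> via (flip d) (flipv u) (flipv w)"

lemma via_below_T [simp]: "via_below d (T i) w \<longleftrightarrow> w = T i"
  by (cases w) (auto simp: via_below_def)

lemma via_below_B [simp]: "via_below d (B l) w \<longleftrightarrow> (\<exists>j. w = B j \<and> {T j, B l} \<in> d)"
  by (cases w) (auto simp: via_below_def mem_flip insert_commute)

lemma via_below_inj: "motzkin k d \<Longrightarrow> via_below d u a \<Longrightarrow> via_below d v a \<Longrightarrow> u = v"
  unfolding via_below_def using via_inj[OF motzkin_flip] by (metis flipv_eq_iff)

theorem compose_vertical_right:
  assumes m1: "motzkin k d1" and m2: "motzkin k d2" "vertical d2"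
  shows "compose d1 d2 = pull (via_below d2) d1"
proof -
  have "compose d1 d2 = flip (compose (flip d2) (flip d1))" by (simp add: compose_flip)
  also have "\<dots> = flip (pull (via (flip d2)) (flip d1))"
    using compose_vertical_left[OF motzkin_flip[OF m2(1)] vertical_flip[OF m2(2)] motzkin_flip[OF m1]]
    by simp
  also have "\<dots> = pull (via_below d2) d1" by (simp add: flip_pull via_below_def[abs_def])
  finally show ?thesis .
qed

lemma motzkin_compose_vertical_right:
  assumes m1: "motzkin k d1" and m2: "motzkin k d2" "vertical d2"
  shows "motzkin k (compose d1 d2)"
proof -
  have "motzkin k (compose (flip d2) (flip d1))"
    by (rule motzkin_compose_vertical_left[OF motzkin_flip[OF m2(1)] vertical_flip[OF m2(2)] motzkin_flip[OF m1]])
  then show ?thesis using motzkin_flip by (fastforce simp: compose_flip)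
qed

text \<open>A closed loop lies in the middle row; so there are none if every middle vertex met from
  both sides is connected to an outer row.\<close>
lemma kappa_eq_0:
  assumes "\<And>i. covered d1 (B i) \<Longrightarrow> covered d2 (T i) \<Longrightarrow>
             \<exists>w. (Mid i, w) \<in> stack_conn d1 d2 \<and> (\<forall>j. w \<noteq> Mid j)"
  shows "kappa d1 d2 = 0"
proof -
  have "loops d1 d2 = {}"
  proof (rule ccontr)
    assume "loops d1 d2 \<noteq> {}"
    then obtain C i where C: "C = stack_conn d1 d2 `` {Mid i}"
      "\<forall>w\<in>C. \<exists>j. w = Mid j \<and> covered d1 (B j) \<and> covered d2 (T j)"
      unfolding loops_def by blast
    have "Mid i \<in> C" using C(1) by (simp add: stack_conn_def)
    then obtain w where "(Mid i, w) \<in> stack_conn d1 d2" "\<forall>j. w \<noteq> Mid j"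
      using C(2) assms by blast
    then show False using C by blast
  qed
  then show ?thesis by (simp add: kappa_def)
qed

lemma vertical_covered_B: "vertical d \<Longrightarrow> covered d (B j) \<Longrightarrow> \<exists>i. {T i, B j} \<in> d"
  unfolding vertical_def covered_def by fastforce

lemma vertical_covered_T: "vertical d \<Longrightarrow> covered d (T i) \<Longrightarrow> \<exists>j. {T i, B j} \<in> d"
  unfolding vertical_def covered_def by fastforce

lemma kappa_vertical_left: "vertical d1 \<Longrightarrow> kappa d1 d2 = 0"
proof (rule kappa_eq_0)
  fix j assume "vertical d1" "covered d1 (B j)"
  then obtain i where "{T i, B j} \<in> d1" using vertical_covered_B by blast
  then have "(emb1 (B j), emb1 (T i)) \<in> stack_adj d1 d2"
    by (intro stack_adjI1) (auto simp: insert_commute)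
  then show "\<exists>w. (Mid j, w) \<in> stack_conn d1 d2 \<and> (\<forall>j. w \<noteq> Mid j)"
    by (intro exI[of _ "Up i"]) (auto simp: stack_conn_def)
qed

lemma kappa_vertical_right: "vertical d2 \<Longrightarrow> kappa d1 d2 = 0"
proof (rule kappa_eq_0)
  fix i assume "vertical d2" "covered d2 (T i)"
  then obtain j where "{T i, B j} \<in> d2" using vertical_covered_T by blast
  then have "(emb2 (T i), emb2 (B j)) \<in> stack_adj d1 d2" by (intro stack_adjI2) auto
  then show "\<exists>w. (Mid i, w) \<in> stack_conn d1 d2 \<and> (\<forall>j. w \<noteq> Mid j)"
    by (intro exI[of _ "Dn j"]) (auto simp: stack_conn_def)
qed

lemma compose_vertical_mem:
  assumes m1: "motzkin k d1" "vertical d1" and m2: "motzkin k d2" "vertical d2"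
  shows "{T a, B b} \<in> compose d1 d2 \<longleftrightarrow> (\<exists>c. {T a, B c} \<in> d1 \<and> {T c, B b} \<in> d2)"
proof
  assume "{T a, B b} \<in> compose d1 d2"
  then obtain u v x y where h: "{T a, B b} = {u, v}" "via d1 u x" "via d1 v y" "{x, y} \<in> d2"
    unfolding compose_vertical_left[OF m1 m2(1)] by (rule pullE)
  from h(1) have "(u = T a \<and> v = B b) \<or> (u = B b \<and> v = T a)" by (auto simp: doubleton_eq_iff)
  then show "\<exists>c. {T a, B c} \<in> d1 \<and> {T c, B b} \<in> d2"
  proof
    assume "u = T a \<and> v = B b"
    then obtain c where "x = T c" "{T a, B c} \<in> d1" "y = B b" using h(2,3) by auto
    then show ?thesis using h(4) by blast
  next
    assume "u = B b \<and> v = T a"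
    then obtain c where "y = T c" "{T a, B c} \<in> d1" "x = B b" using h(2,3) by auto
    moreover have "{y, x} \<in> d2" using h(4) by (simp add: insert_commute)
    ultimately show ?thesis by blast
  qed
next
  assume "\<exists>c. {T a, B c} \<in> d1 \<and> {T c, B b} \<in> d2"
  then obtain c where "{T a, B c} \<in> d1" "{T c, B b} \<in> d2" by blast
  then have "{T a, B b} \<in> pull (via d1) d2" by (intro pullI[of _ _ _ "T c" "B b"]) auto
  then show "{T a, B b} \<in> compose d1 d2" unfolding compose_vertical_left[OF m1 m2(1)] .
qed

lemma vertical_compose:
  assumes m1: "motzkin k d1" "vertical d1" and m2: "motzkin k d2" "vertical d2"
  shows "vertical (compose d1 d2)"
  unfolding vertical_def
proof
  fix e assume "e \<in> compose d1 d2"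
  then obtain u v x y where h: "e = {u, v}" "via d1 u x" "via d1 v y" "{x, y} \<in> d2"
    unfolding compose_vertical_left[OF m1 m2(1)] by (rule pullE)
  from vertical_edge_cases[OF m2(2) h(4)] show "\<exists>i j. e = {T i, B j}"
    using h(1-3) by (cases u; cases v) (auto simp: insert_commute)
qed

subsection \<open>Directional diagrams\<close>

text \<open>RP and LP are spanned by the Motzkin diagrams whose edges are all vertical and satisfy a
  given relation between top and bottom index; we treat both cases at once.\<close>
definition dir_diagram :: "nat \<Rightarrow> (nat \<Rightarrow> nat \<Rightarrow> bool) \<Rightarrow> diagram \<Rightarrow> bool" where
  "dir_diagram k R d \<longleftrightarrow> motzkin k d \<and> (\<forall>e\<in>d. \<exists>i j. e = {T i, B j} \<and> R i j)"

lemma rp_diagram_dir: "rp_diagram k = dir_diagram k (\<lambda>i j. j \<le> i)"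
  by (simp add: fun_eq_iff rp_diagram_def dir_diagram_def)

lemma lp_diagram_dir: "lp_diagram k = dir_diagram k (\<le>)"
  by (simp add: fun_eq_iff lp_diagram_def dir_diagram_def)

lemma dir_diagram_motzkin: "dir_diagram k R d \<Longrightarrow> motzkin k d"
  and dir_diagram_vertical: "dir_diagram k R d \<Longrightarrow> vertical d"
  unfolding dir_diagram_def vertical_def by blast+

lemma dir_diagram_edge: "dir_diagram k R d \<Longrightarrow> {T i, B j} \<in> d \<Longrightarrow> R i j"
  unfolding dir_diagram_def by (fastforce simp: doubleton_eq_iff)

lemma dir_diagramI:
  assumes "motzkin k d" "vertical d" "\<And>i j. {T i, B j} \<in> d \<Longrightarrow> R i j"
  shows "dir_diagram k R d"
  unfolding dir_diagram_def
proof (intro conjI ballI)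
  fix e assume "e \<in> d"
  then obtain i j where "e = {T i, B j}" using assms(2) unfolding vertical_def by blast
  then show "\<exists>i j. e = {T i, B j} \<and> R i j" using assms(3) \<open>e \<in> d\<close> by blast
qed (fact assms(1))

lemma dir_diagram_compose:
  assumes trans: "\<And>i j l. R i j \<Longrightarrow> R j l \<Longrightarrow> R i l"
    and d1: "dir_diagram k R d1" and d2: "dir_diagram k R d2"
  shows "dir_diagram k R (compose d1 d2)"
proof -
  note m1 = dir_diagram_motzkin[OF d1] dir_diagram_vertical[OF d1]
  note m2 = dir_diagram_motzkin[OF d2] dir_diagram_vertical[OF d2]
  show ?thesis
  proof (rule dir_diagramI)
    show "motzkin k (compose d1 d2)" by (rule motzkin_compose_vertical_left[OF m1 m2(1)])
    show "vertical (compose d1 d2)" by (rule vertical_compose[OF m1 m2])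
    fix i j assume "{T i, B j} \<in> compose d1 d2"
    then obtain c where "{T i, B c} \<in> d1" "{T c, B j} \<in> d2"
      unfolding compose_vertical_mem[OF m1 m2] by blast
    then show "R i j" using trans dir_diagram_edge[OF d1] dir_diagram_edge[OF d2] by blast
  qed
qed

text \<open>The diagram moving the bottom end of the strand at top vertex a to bottom vertex b and
  keeping all other vertical strands; the generators r_i and l_i are instances.\<close>
definition slide :: "nat \<Rightarrow> nat \<Rightarrow> nat \<Rightarrow> diagram" where
  "slide k a b = {{T j, B j} | j. 1 \<le> j \<and> j \<le> k \<and> j \<noteq> a \<and> j \<noteq> b} \<union> {{T a, B b}}"

lemma r_diag_slide: "r_diag k i = slide k (i + 1) i"
  unfolding r_diag_def slide_def by (intro arg_cong2[where f = "(\<union>)"] Collect_cong) auto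

lemma l_diag_slide: "l_diag k i = slide k i (i + 1)"
  unfolding l_diag_def slide_def by (intro arg_cong2[where f = "(\<union>)"] Collect_cong) auto

lemma slide_mem:
  "{T x, B y} \<in> slide k a b \<longleftrightarrow> (x = y \<and> 1 \<le> x \<and> x \<le> k \<and> x \<noteq> a \<and> x \<noteq> b) \<or> (x = a \<and> y = b)"
  by (auto simp: slide_def doubleton_eq_iff)

lemma vertical_slide: "vertical (slide k a b)"
  by (auto simp: slide_def vertical_def)

lemma motzkin_slide:
  assumes "1 \<le> a" "a \<le> k" "1 \<le> b" "b \<le> k" and adj: "a = b + 1 \<or> b = a + 1"
  shows "motzkin k (slide k a b)"
  by (rule monotone_vertical_motzkin[OF vertical_slide]) (use assms in \<open>auto simp: slide_mem\<close>)

lemma dir_diagram_slide: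
  assumes refl: "\<And>i. R i i" and "R a b" and "1 \<le> a" "a \<le> k" "1 \<le> b" "b \<le> k"
    and adj: "a = b + 1 \<or> b = a + 1"
  shows "dir_diagram k R (slide k a b)"
proof (rule dir_diagramI[OF motzkin_slide[OF assms(3-7)] vertical_slide])
  show "R i j" if "{T i, B j} \<in> slide k a b" for i j
    using that refl \<open>R a b\<close> by (auto simp: slide_mem)
qed

lemma dir_diagram_diagonal:
  assumes refl: "\<And>i. R i i" and v: "vertical d"
    and diag: "\<And>i j. {T i, B j} \<in> d \<Longrightarrow> i = j \<and> 1 \<le> i \<and> i \<le> k"
  shows "dir_diagram k R d"
proof (rule dir_diagramI[OF _ v])
  show "motzkin k d" by (rule monotone_vertical_motzkin[OF v]) (use diag in auto)
  show "R i j" if "{T i, B j} \<in> d" for i j using diag[OF that] refl by simp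
qed

lemma p_diag_mem: "{T a, B b} \<in> p_diag k m \<longleftrightarrow> a = b \<and> 1 \<le> a \<and> a \<le> k \<and> a \<noteq> m"
  by (auto simp: p_diag_def doubleton_eq_iff)

lemma idd_mem: "{T a, B b} \<in> idd k \<longleftrightarrow> a = b \<and> 1 \<le> a \<and> a \<le> k"
  by (auto simp: idd_def doubleton_eq_iff)

lemma vertical_p_diag: "vertical (p_diag k m)"
  and vertical_idd: "vertical (idd k)"
  by (auto simp: p_diag_def idd_def vertical_def)

lemma dir_diagram_p_diag: "(\<And>i. R i i) \<Longrightarrow> dir_diagram k R (p_diag k m)"
  by (rule dir_diagram_diagonal[OF _ vertical_p_diag]) (auto simp: p_diag_mem)

lemma dir_diagram_idd: "(\<And>i. R i i) \<Longrightarrow> dir_diagram k R (idd k)"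
  by (rule dir_diagram_diagonal[OF _ vertical_idd]) (auto simp: idd_mem)

definition lin_closed :: "(diagram \<Rightarrow> 'a::comm_ring_1) set \<Rightarrow> bool" where
  "lin_closed C \<longleftrightarrow> (\<lambda>_. 0) \<in> C \<and> (\<forall>f\<in>C. \<forall>g\<in>C. (\<lambda>d. f d + g d) \<in> C) \<and> (\<forall>f\<in>C. \<forall>c. (\<lambda>d. c * f d) \<in> C)"

lemma lin_closed_supported: "lin_closed (supported P)"
proof -
  have "(\<lambda>d. f d + g d) \<in> supported P" if "f \<in> supported P" "g \<in> supported P" for f g :: "diagram \<Rightarrow> 'a"
  proof -
    have "f d \<noteq> 0 \<or> g d \<noteq> 0" if "f d + g d \<noteq> 0" for d using that by auto
    then show ?thesis using that unfolding supported_def by blast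
  qed
  moreover have "(\<lambda>d. c * f d) \<in> supported P" if "f \<in> supported P" for f :: "diagram \<Rightarrow> 'a" and c
  proof -
    have "f d \<noteq> 0" if "c * f d \<noteq> 0" for d using that by auto
    then show ?thesis using that unfolding supported_def by blast
  qed
  moreover have "(\<lambda>_. 0) \<in> supported P" by (simp add: supported_def)
  ultimately show ?thesis unfolding lin_closed_def by blast
qed

lemma lin_closed_lspan: "lin_closed (lspan S)"
  unfolding lin_closed_def using lspan.zero lspan.add lspan.smul by blast

lemma lin_closed_alg_gen: "lin_closed (alg_gen k x S)"
proof -
  have "(\<lambda>d. 0 * basis (idd k) d) \<in> alg_gen k x S" by (intro alg_gen.smul alg_gen.one)
  then have "(\<lambda>_. 0) \<in> alg_gen k x S" by simp
  then show ?thesis unfolding lin_closed_def using alg_gen.add alg_gen.smul by blast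
qed

lemma lspan_least:
  assumes C: "lin_closed C" and "S \<subseteq> C"
  shows "lspan S \<subseteq> C"
proof
  fix f assume "f \<in> lspan S"
  then show "f \<in> C"
  proof (induction rule: lspan.induct)
    case zero then show ?case using C by (simp add: lin_closed_def)
  next
    case (gen f) then show ?case using \<open>S \<subseteq> C\<close> by blast
  next
    case (add f g) then show ?case using C by (simp add: lin_closed_def)
  next
    case (smul f c) then show ?case using C by (simp add: lin_closed_def)
  qed
qed

lemma lin_closed_sum:
  assumes C: "lin_closed C" and "finite A" "\<And>d. d \<in> A \<Longrightarrow> g d \<in> C"
  shows "(\<lambda>e. \<Sum>d\<in>A. c d * g d e) \<in> C"
  using assms(2,3)
proof (induction A rule: finite_induct)
  case empty then show ?case using C by (simp add: lin_closed_def)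
next
  case (insert a A)
  have "(\<lambda>e. c a * g a e) \<in> C" "(\<lambda>e. \<Sum>d\<in>A. c d * g d e) \<in> C"
    using insert C by (simp_all add: lin_closed_def)
  then have "(\<lambda>e. c a * g a e + (\<Sum>d\<in>A. c d * g d e)) \<in> C" using C by (simp add: lin_closed_def)
  then show ?case using insert by simp
qed

lemma basis_supported: "P d \<Longrightarrow> basis d \<in> supported P"
  unfolding supported_def basis_def by auto

text \<open>A finitely supported coefficient function is the linear combination of basis diagrams
  it describes; so a linearly closed set containing the basis diagrams contains the span.\<close>
lemma supported_least:
  assumes C: "lin_closed C" and fin: "finite (Collect P)" and basis: "\<And>d. P d \<Longrightarrow> basis d \<in> C"
  shows "supported P \<subseteq> C"
proof
  fix f :: "diagram \<Rightarrow> 'a" assume f: "f \<in> supported P"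
  have "f = (\<lambda>e. \<Sum>d\<in>Collect P. f d * basis d e)"
  proof
    fix e
    have "(\<Sum>d\<in>Collect P. f d * basis d e) = (\<Sum>d\<in>Collect P. if e = d then f e else 0)"
      by (rule sum.cong) (auto simp: basis_def)
    also have "\<dots> = (if P e then f e else 0)" using fin by simp
    also have "\<dots> = f e" using f by (auto simp: supported_def)
    finally show "f e = (\<Sum>d\<in>Collect P. f d * basis d e)" by simp
  qed
  also have "\<dots> \<in> C" by (rule lin_closed_sum[OF C fin]) (simp add: basis)
  finally show "f \<in> C" .
qed

lemma finite_motzkin_class: "(\<And>d. P d \<Longrightarrow> motzkin k d) \<Longrightarrow> finite (Collect P)"
  using finite_Mot[of k] by (rule rev_finite_subset) (auto simp: Mot_def)

lemma mmult_basis: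
  assumes "motzkin k a" "motzkin k b"
  shows "mmult k x (basis a) (basis b) = (\<lambda>d. if d = compose a b then x ^ kappa a b else 0)"
proof
  fix d
  let ?S = "{(d1, d2). d1 \<in> Mot k \<and> d2 \<in> Mot k \<and> compose d1 d2 = d}"
  have fin: "finite ?S"
    by (rule finite_subset[of _ "Mot k \<times> Mot k"]) (auto simp: finite_Mot)
  have "mmult k x (basis a) (basis b) d = (\<Sum>p\<in>?S. if (a, b) = p then x ^ kappa a b else 0)"
    unfolding mmult_def by (rule sum.cong) (auto simp: basis_def)
  also have "\<dots> = (if (a, b) \<in> ?S then x ^ kappa a b else 0)"
    using fin by simp
  also have "\<dots> = (if d = compose a b then x ^ kappa a b else 0)"
    using assms by (auto simp: Mot_def)
  finally show "mmult k x (basis a) (basis b) d = (if d = compose a b then x ^ kappa a b else 0)" .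
qed

lemma mmult_basis_no_loops:
  assumes "motzkin k a" "motzkin k b" "kappa a b = 0"
  shows "mmult k x (basis a) (basis b) = basis (compose a b)"
  using mmult_basis[OF assms(1,2), of x] assms(3) by (auto simp: basis_def)

lemma mmult_support:
  assumes "mmult k x f g d \<noteq> 0"
  shows "\<exists>d1 d2. motzkin k d1 \<and> motzkin k d2 \<and> compose d1 d2 = d \<and> f d1 \<noteq> 0 \<and> g d2 \<noteq> 0"
proof -
  obtain p where p: "p \<in> {(d1, d2). d1 \<in> Mot k \<and> d2 \<in> Mot k \<and> compose d1 d2 = d}"
      "f (fst p) * g (snd p) * x ^ kappa (fst p) (snd p) \<noteq> 0"
    using assms unfolding mmult_def by (meson sum.neutral)
  then obtain d1 d2 where "p = (d1, d2)" "motzkin k d1" "motzkin k d2" "compose d1 d2 = d"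
    by (auto simp: Mot_def)
  moreover have "f d1 \<noteq> 0" "g d2 \<noteq> 0" using p(2) calculation(1) by auto
  ultimately show ?thesis by blast
qed

lemma supported_mmult:
  assumes "f \<in> supported P" "g \<in> supported Q"
    and "\<And>d1 d2. motzkin k d1 \<Longrightarrow> motzkin k d2 \<Longrightarrow> P d1 \<Longrightarrow> Q d2 \<Longrightarrow> S (compose d1 d2)"
  shows "mmult k x f g \<in> supported S"
  unfolding supported_def
proof (intro CollectI allI impI)
  fix d assume "mmult k x f g d \<noteq> 0"
  then obtain d1 d2 where "motzkin k d1" "motzkin k d2" "compose d1 d2 = d" "f d1 \<noteq> 0" "g d2 \<noteq> 0"
    using mmult_support by blast
  then show "S d" using assms unfolding supported_def by blast
qed

definition vedges :: "diagram \<Rightarrow> (nat \<times> nat) set" where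
  "vedges d = {(i, j). {T i, B j} \<in> d}"

lemma in_vedges [simp]: "(i, j) \<in> vedges d \<longleftrightarrow> {T i, B j} \<in> d"
  by (simp add: vedges_def)

lemma finite_vedges: "motzkin k d \<Longrightarrow> finite (vedges d)"
  by (rule finite_subset[of _ "{1..k} \<times> {1..k}"]) (auto dest: motzkin_edge_range)

text \<open>The induction measure: the total horizontal displacement of the strands plus the number of
  top vertices without a strand. Among directional diagrams it vanishes only on the identity.\<close>
definition displacement :: "nat \<Rightarrow> diagram \<Rightarrow> nat" where
  "displacement k d = (\<Sum>p\<in>vedges d. (fst p - snd p) + (snd p - fst p)) + card ({1..k} - fst ` vedges d)"

lemma displacement_move:
  assumes m: "motzkin k d" and e: "{T i0, B b} \<in> d" and free: "\<And>i. {T i, B a} \<notin> d"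
    and closer: "(i0 - a) + (a - i0) < (i0 - b) + (b - i0)"
  shows "displacement k (insert {T i0, B a} (d - {{T i0, B b}})) < displacement k d"
proof -
  let ?d' = "insert {T i0, B a} (d - {{T i0, B b}})"
  have ve: "vedges ?d' = insert (i0, a) (vedges d - {(i0, b)})"
    by (auto simp: doubleton_eq_iff vedges_def)
  have fin: "finite (vedges d)" using finite_vedges[OF m] .
  have "fst ` vedges ?d' = fst ` insert (i0, b) (vedges d - {(i0, b)})"
    unfolding ve by (simp only: image_insert fst_conv)
  also have "insert (i0, b) (vedges d - {(i0, b)}) = vedges d" using e by (intro insert_Diff) simp
  finally have "fst ` vedges ?d' = fst ` vedges d" .
  moreover have "(\<Sum>p\<in>vedges ?d'. (fst p - snd p) + (snd p - fst p))
      < (\<Sum>p\<in>vedges d. (fst p - snd p) + (snd p - fst p))"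
  proof -
    have notin: "(i0, a) \<notin> vedges d - {(i0, b)}" using free by auto
    have "(\<Sum>p\<in>vedges ?d'. (fst p - snd p) + (snd p - fst p))
        = (i0 - a) + (a - i0) + (\<Sum>p\<in>vedges d - {(i0, b)}. (fst p - snd p) + (snd p - fst p))"
      unfolding ve using fin notin by simp
    moreover have "(\<Sum>p\<in>vedges d. (fst p - snd p) + (snd p - fst p))
        = (i0 - b) + (b - i0) + (\<Sum>p\<in>vedges d - {(i0, b)}. (fst p - snd p) + (snd p - fst p))"
      using sum.remove[OF fin, of "(i0, b)" "\<lambda>p. (fst p - snd p) + (snd p - fst p)"] e by simp
    ultimately show ?thesis using closer by simp
  qed
  ultimately show ?thesis unfolding displacement_def by simp
qed

lemma displacement_insert_diagonal:
  assumes m: "motzkin k d" and j: "1 \<le> j" "j \<le> k" and free: "\<And>l. {T j, B l} \<notin> d"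
  shows "displacement k (insert {T j, B j} d) < displacement k d"
proof -
  have ve: "vedges (insert {T j, B j} d) = insert (j, j) (vedges d)"
    by (auto simp: doubleton_eq_iff vedges_def)
  have fin: "finite (vedges d)" using finite_vedges[OF m] .
  have "(j, j) \<notin> vedges d" using free by auto
  then have "(\<Sum>p\<in>vedges (insert {T j, B j} d). (fst p - snd p) + (snd p - fst p))
      = (\<Sum>p\<in>vedges d. (fst p - snd p) + (snd p - fst p))"
    unfolding ve using fin by simp
  moreover have "card ({1..k} - fst ` vedges (insert {T j, B j} d)) < card ({1..k} - fst ` vedges d)"
  proof -
    have notin: "j \<notin> fst ` vedges d" using free by auto
    have "{1..k} - fst ` vedges (insert {T j, B j} d) = ({1..k} - fst ` vedges d) - {j}"
      unfolding ve by auto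
    moreover have "j \<in> {1..k} - fst ` vedges d" using j notin by auto
    then have "card (({1..k} - fst ` vedges d) - {j}) < card ({1..k} - fst ` vedges d)"
      by (intro card_Diff1_less) simp_all
    ultimately show ?thesis by simp
  qed
  ultimately show ?thesis unfolding displacement_def by simp
qed

definition step_toward :: "nat \<Rightarrow> nat \<Rightarrow> nat \<Rightarrow> bool" where
  "step_toward i b a \<longleftrightarrow> (a = b + 1 \<and> a \<le> i) \<or> (b = a + 1 \<and> i \<le> a)"

definition move_strand :: "diagram \<Rightarrow> nat \<Rightarrow> nat \<Rightarrow> nat \<Rightarrow> diagram" where
  "move_strand d i0 b a = insert {T i0, B a} (d - {{T i0, B b}})"

lemma move_strand_mem:
  "{T x, B y} \<in> move_strand d i0 b a \<longleftrightarrow> (x = i0 \<and> y = a) \<or> ({T x, B y} \<in> d \<and> \<not> (x = i0 \<and> y = b))"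
  unfolding move_strand_def by (auto simp: doubleton_eq_iff)

lemma vertical_move_strand: "vertical d \<Longrightarrow> vertical (move_strand d i0 b a)"
  unfolding move_strand_def vertical_def by blast

text \<open>Moving the end of a strand to a free neighbouring bottom vertex keeps the diagram planar:
  every other strand stays on the same side of the moved one.\<close>
lemma motzkin_move_strand:
  assumes m: "motzkin k d" "vertical d" and e: "{T i0, B b} \<in> d" and adj: "a = b + 1 \<or> b = a + 1"
    and a: "1 \<le> a" "a \<le> k" and free: "\<And>i. {T i, B a} \<notin> d"
  shows "motzkin k (move_strand d i0 b a)"
proof -
  have side: "x < i0 \<longleftrightarrow> y < a" "i0 < x \<longleftrightarrow> a < y"
    if "{T x, B y} \<in> d" "\<not> (x = i0 \<and> y = b)" for x y
  proof -
    have "y \<noteq> b" using motzkin_bottom_unique[OF m(1) that(1)] e that(2) by auto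
    moreover have "y \<noteq> a" using free that(1) by auto
    moreover have "x < i0 \<longleftrightarrow> y < b" "i0 < x \<longleftrightarrow> b < y"
      using motzkin_vertical_mono_iff[OF m(1) that(1) e] motzkin_vertical_mono_iff[OF m(1) e that(1)]
      by auto
    ultimately show "x < i0 \<longleftrightarrow> y < a" "i0 < x \<longleftrightarrow> a < y" using adj by auto
  qed
  show ?thesis
  proof (rule monotone_vertical_motzkin[OF vertical_move_strand[OF m(2)]])
    show "1 \<le> x \<and> x \<le> k \<and> 1 \<le> y \<and> y \<le> k" if "{T x, B y} \<in> move_strand d i0 b a" for x y
      using that a motzkin_edge_range[OF m(1)] motzkin_edge_range[OF m(1) e]
      by (auto simp: move_strand_mem)
    show "x < x' \<longleftrightarrow> y < y'"
      if "{T x, B y} \<in> move_strand d i0 b a" "{T x', B y'} \<in> move_strand d i0 b a" for x y x' y'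
      using that side motzkin_vertical_mono_iff[OF m(1)] unfolding move_strand_mem
      by (metis less_irrefl)
  qed
qed

lemma compose_move_strand_slide:
  assumes m: "motzkin k d" "vertical d" and e: "{T i0, B b} \<in> d" and adj: "a = b + 1 \<or> b = a + 1"
    and a: "1 \<le> a" "a \<le> k" and free: "\<And>i. {T i, B a} \<notin> d"
  shows "compose (move_strand d i0 b a) (slide k a b) = d"
proof -
  note md' = motzkin_move_strand[OF assms] and vd' = vertical_move_strand[OF m(2)]
  have ms: "motzkin k (slide k a b)"
    using motzkin_slide[OF a _ _ adj] motzkin_edge_range[OF m(1) e] by simp
  show ?thesis
  proof (rule vertical_ext[OF vertical_compose[OF md' vd' ms vertical_slide] m(2)])
    fix x y
    show "{T x, B y} \<in> compose (move_strand d i0 b a) (slide k a b) \<longleftrightarrow> {T x, B y} \<in> d"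
      unfolding compose_vertical_mem[OF md' vd' ms vertical_slide]
    proof
      assume "\<exists>c. {T x, B c} \<in> move_strand d i0 b a \<and> {T c, B y} \<in> slide k a b"
      then obtain c where "(x = i0 \<and> c = a) \<or> ({T x, B c} \<in> d \<and> \<not> (x = i0 \<and> c = b))"
        "(c = y \<and> c \<noteq> a) \<or> (c = a \<and> y = b)"
        unfolding move_strand_mem slide_mem by blast
      then show "{T x, B y} \<in> d" using e free by auto
    next
      assume xy: "{T x, B y} \<in> d"
      show "\<exists>c. {T x, B c} \<in> move_strand d i0 b a \<and> {T c, B y} \<in> slide k a b"
      proof (cases "x = i0 \<and> y = b")
        case True then show ?thesis by (intro exI[of _ a]) (simp add: move_strand_mem slide_mem)
      next
        case False
        have "y \<noteq> b" using motzkin_bottom_unique[OF m(1) xy] e False by auto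
        moreover have "y \<noteq> a" using free xy by auto
        moreover have "1 \<le> y \<and> y \<le> k" using motzkin_edge_range[OF m(1) xy] by simp
        ultimately show ?thesis using xy False
          by (intro exI[of _ y]) (simp add: move_strand_mem slide_mem)
      qed
    qed
  qed
qed

lemma slide_step:
  assumes d: "dir_diagram k R d" and e: "{T i0, B b} \<in> d" and st: "step_toward i0 b a"
    and "R i0 a" and free: "\<And>i. {T i, B a} \<notin> d"
  shows "dir_diagram k R (move_strand d i0 b a)" "compose (move_strand d i0 b a) (slide k a b) = d"
    "displacement k (move_strand d i0 b a) < displacement k d" "motzkin k (slide k a b)"
proof -
  note m = dir_diagram_motzkin[OF d] dir_diagram_vertical[OF d]
  have adj: "a = b + 1 \<or> b = a + 1" and a: "1 \<le> a" "a \<le> k"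
    using st motzkin_edge_range[OF m(1) e] unfolding step_toward_def by auto
  show "dir_diagram k R (move_strand d i0 b a)"
    by (rule dir_diagramI[OF motzkin_move_strand[OF m e adj a free] vertical_move_strand[OF m(2)]])
      (use \<open>R i0 a\<close> dir_diagram_edge[OF d] in \<open>auto simp: move_strand_mem\<close>)
  show "compose (move_strand d i0 b a) (slide k a b) = d"
    by (rule compose_move_strand_slide[OF m e adj a free])
  show "motzkin k (slide k a b)"
    using motzkin_slide[OF a _ _ adj] motzkin_edge_range[OF m(1) e] by simp
  show "displacement k (move_strand d i0 b a) < displacement k d"
    unfolding move_strand_def using displacement_move[OF m(1) e free] st
    unfolding step_toward_def by auto
qed

lemma extend_step:
  assumes d: "dir_diagram k R d" and "R j j" and diag: "\<And>i l. {T i, B l} \<in> d \<Longrightarrow> i = l"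
    and j: "1 \<le> j" "j \<le> k" and free: "\<And>l. {T j, B l} \<notin> d"
  defines "d' \<equiv> insert {T j, B j} d"
  shows "dir_diagram k R d'" "compose d' (p_diag k j) = d" "displacement k d' < displacement k d"
proof -
  note m = dir_diagram_motzkin[OF d] and v = dir_diagram_vertical[OF d]
  have mem: "{T x, B y} \<in> d' \<longleftrightarrow> (x = j \<and> y = j) \<or> {T x, B y} \<in> d" for x y
    unfolding d'_def by (auto simp: doubleton_eq_iff)
  have vd': "vertical d'" using v unfolding d'_def vertical_def by blast
  have diag': "x = y" if "{T x, B y} \<in> d'" for x y using that diag by (auto simp: mem)
  have md': "motzkin k d'"
  proof (rule monotone_vertical_motzkin[OF vd'])
    show "1 \<le> x \<and> x \<le> k \<and> 1 \<le> y \<and> y \<le> k" if "{T x, B y} \<in> d'" for x y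
      using that j motzkin_edge_range[OF m] by (auto simp: mem)
    show "x < x' \<longleftrightarrow> y < y'" if "{T x, B y} \<in> d'" "{T x', B y'} \<in> d'" for x y x' y'
      using diag'[OF that(1)] diag'[OF that(2)] by simp
  qed
  show "dir_diagram k R d'"
    by (rule dir_diagramI[OF md' vd']) (use \<open>R j j\<close> dir_diagram_edge[OF d] in \<open>auto simp: mem\<close>)
  have mp: "motzkin k (p_diag k j)"
    by (rule monotone_vertical_motzkin[OF vertical_p_diag]) (auto simp: p_diag_mem)
  have nb: "{T x, B j} \<notin> d" for x using diag free by blast
  show "compose d' (p_diag k j) = d"
  proof (rule vertical_ext[OF vertical_compose[OF md' vd' mp vertical_p_diag] v])
    fix x y
    show "{T x, B y} \<in> compose d' (p_diag k j) \<longleftrightarrow> {T x, B y} \<in> d"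
      unfolding compose_vertical_mem[OF md' vd' mp vertical_p_diag] p_diag_mem mem
      using nb motzkin_edge_range[OF m] by auto
  qed
  show "displacement k d' < displacement k d"
    unfolding d'_def by (rule displacement_insert_diagonal[OF m j free])
qed

lemma diagonal_full_idd:
  assumes d: "dir_diagram k R d" and diag: "\<And>i l. {T i, B l} \<in> d \<Longrightarrow> i = l"
    and full: "\<And>j. 1 \<le> j \<Longrightarrow> j \<le> k \<Longrightarrow> \<exists>l. {T j, B l} \<in> d"
  shows "d = idd k"
proof (rule vertical_ext[OF dir_diagram_vertical[OF d] vertical_idd])
  fix a b
  show "{T a, B b} \<in> d \<longleftrightarrow> {T a, B b} \<in> idd k"
    unfolding idd_mem using full diag motzkin_edge_range[OF dir_diagram_motzkin[OF d]] by blast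
qed

text \<open>Multiplying by a vertical diagram creates no loops, so the composite stays in the algebra.\<close>
lemma alg_gen_compose_vertical:
  assumes "basis d \<in> alg_gen k x G" "basis g \<in> alg_gen k x G"
    and "motzkin k d" "vertical d" "motzkin k g"
  shows "basis (compose d g) \<in> alg_gen k x G"
  using alg_gen.mult[OF assms(1,2)]
    mmult_basis_no_loops[OF assms(3,5) kappa_vertical_left[OF assms(4)], where x = x]
  by simp

lemma dir_diagram_generated:
  assumes refl: "\<And>i. R i i"
    and reduce: "\<And>d i j. dir_diagram k R d \<Longrightarrow> {T i, B j} \<in> d \<Longrightarrow> i \<noteq> j \<Longrightarrow>
        \<exists>i0 a b. {T i0, B b} \<in> d \<and> step_toward i0 b a \<and> R i0 a \<and> (\<forall>i. {T i, B a} \<notin> d)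
          \<and> basis (slide k a b) \<in> G"
    and p: "\<And>j. 1 \<le> j \<Longrightarrow> j \<le> k \<Longrightarrow> basis (p_diag k j) \<in> G"
    and "dir_diagram k R d"
  shows "basis d \<in> alg_gen k x G"
  using assms(4)
proof (induction "displacement k d" arbitrary: d rule: less_induct)
  case less
  show ?case
  proof (cases "\<exists>i j. {T i, B j} \<in> d \<and> i \<noteq> j")
    case True
    then obtain i0 a b where h: "{T i0, B b} \<in> d" "step_toward i0 b a" "R i0 a"
        "\<And>i. {T i, B a} \<notin> d" "basis (slide k a b) \<in> G"
      using reduce[OF less.prems] by blast
    note st = slide_step[OF less.prems h(1-4)]
    have "basis (move_strand d i0 b a) \<in> alg_gen k x G"
      using less.hyps[OF st(3) st(1)] .
    then show ?thesis
      using alg_gen_compose_vertical[OF _ alg_gen.gen[OF h(5)] dir_diagram_motzkin[OF st(1)]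
          dir_diagram_vertical[OF st(1)] st(4)] st(2) by simp
  next
    case False
    then have diag: "\<And>i l. {T i, B l} \<in> d \<Longrightarrow> i = l" by blast
    show ?thesis
    proof (cases "\<exists>j. 1 \<le> j \<and> j \<le> k \<and> (\<forall>l. {T j, B l} \<notin> d)")
      case True
      then obtain j where j: "1 \<le> j" "j \<le> k" "\<And>l. {T j, B l} \<notin> d" by blast
      note st = extend_step[OF less.prems refl diag j]
      have "basis (insert {T j, B j} d) \<in> alg_gen k x G" using less.hyps[OF st(3) st(1)] .
      moreover have "motzkin k (p_diag k j)"
        by (rule monotone_vertical_motzkin[OF vertical_p_diag]) (auto simp: p_diag_mem)
      ultimately show ?thesis
        using alg_gen_compose_vertical[OF _ alg_gen.gen[OF p[OF j(1,2)]] dir_diagram_motzkin[OF st(1)]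
            dir_diagram_vertical[OF st(1)]] st(2) by simp
    next
      case False
      then have "d = idd k" using diagonal_full_idd[OF less.prems diag] by blast
      then show ?thesis using alg_gen.one by simp
    qed
  qed
qed

text \<open>Conversely the algebra generated by directional diagrams consists of directional diagrams,
  since these are closed under composition.\<close>
lemma alg_gen_dir_diagram:
  assumes refl: "\<And>i. R i i" and trans: "\<And>i j l. R i j \<Longrightarrow> R j l \<Longrightarrow> R i l"
    and G: "\<And>g. g \<in> G \<Longrightarrow> \<exists>d. g = basis d \<and> dir_diagram k R d"
  shows "alg_gen k x G \<subseteq> supported (dir_diagram k R)"
proof
  fix f assume "f \<in> alg_gen k x G"
  then show "f \<in> supported (dir_diagram k R)"
  proof (induction rule: alg_gen.induct)
    case one then show ?case by (intro basis_supported dir_diagram_idd refl)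
  next
    case (gen f) then show ?case using G basis_supported by blast
  next
    case (add f g) then show ?case using lin_closed_supported unfolding lin_closed_def by blast
  next
    case (smul f c) then show ?case using lin_closed_supported unfolding lin_closed_def by blast
  next
    case (mult f g)
    show ?case by (rule supported_mmult[OF mult.IH]) (rule dir_diagram_compose[OF trans])
  qed
qed

theorem dir_span_alg_gen:
  assumes refl: "\<And>i. R i i" and trans: "\<And>i j l. R i j \<Longrightarrow> R j l \<Longrightarrow> R i l"
    and G: "\<And>g. g \<in> G \<Longrightarrow> \<exists>d. g = basis d \<and> dir_diagram k R d"
    and reduce: "\<And>d i j. dir_diagram k R d \<Longrightarrow> {T i, B j} \<in> d \<Longrightarrow> i \<noteq> j \<Longrightarrow>
        \<exists>i0 a b. {T i0, B b} \<in> d \<and> step_toward i0 b a \<and> R i0 a \<and> (\<forall>i. {T i, B a} \<notin> d)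
          \<and> basis (slide k a b) \<in> G"
    and p: "\<And>j. 1 \<le> j \<Longrightarrow> j \<le> k \<Longrightarrow> basis (p_diag k j) \<in> G"
  shows "supported (dir_diagram k R) = alg_gen k x G"
proof
  show "supported (dir_diagram k R) \<subseteq> alg_gen k x G"
    by (rule supported_least[OF lin_closed_alg_gen finite_motzkin_class])
      (auto intro: dir_diagram_motzkin dir_diagram_generated[OF refl reduce p])
  show "alg_gen k x G \<subseteq> supported (dir_diagram k R)" by (rule alg_gen_dir_diagram[OF refl trans G])
qed

text \<open>In a non-diagonal RP diagram, the rightmost bottom end of a strand leaning to the left can
  be moved one step to the right.\<close>
lemma rp_reducible:
  assumes d: "dir_diagram k (\<lambda>i j. j \<le> i) d" and e: "{T i, B j} \<in> d" "i \<noteq> j"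
  shows "\<exists>i0 m. {T i0, B m} \<in> d \<and> m < i0 \<and> (\<forall>i. {T i, B (m + 1)} \<notin> d)"
proof -
  note m = dir_diagram_motzkin[OF d]
  let ?J = "{j. \<exists>i. {T i, B j} \<in> d \<and> j < i}"
  have fin: "finite ?J" by (rule finite_subset[of _ "{..k}"]) (auto dest: motzkin_edge_range[OF m])
  have "j \<in> ?J" using e dir_diagram_edge[OF d e(1)] by auto
  then have "Max ?J \<in> ?J" using fin by (intro Max_in) auto
  then obtain i0 where i0: "{T i0, B (Max ?J)} \<in> d" "Max ?J < i0" by blast
  have "{T i, B (Max ?J + 1)} \<notin> d" for i
  proof
    assume h: "{T i, B (Max ?J + 1)} \<in> d"
    then have "i0 < i" using motzkin_vertical_mono_iff[OF m i0(1) h] by simp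
    then have "Max ?J + 1 \<in> ?J" using h i0(2) by auto
    then show False using Max_ge[OF fin] by fastforce
  qed
  then show ?thesis using i0 by blast
qed

text \<open>Symmetrically, in a non-diagonal LP diagram the leftmost bottom end of a strand leaning to
  the right can be moved one step to the left.\<close>
lemma lp_reducible:
  assumes d: "dir_diagram k (\<le>) d" and e: "{T i, B j} \<in> d" "i \<noteq> j"
  shows "\<exists>i0 m. {T i0, B (m + 1)} \<in> d \<and> i0 \<le> m \<and> (\<forall>i. {T i, B m} \<notin> d)"
proof -
  note m = dir_diagram_motzkin[OF d]
  let ?J = "{j. \<exists>i. {T i, B j} \<in> d \<and> i < j}"
  have fin: "finite ?J" by (rule finite_subset[of _ "{..k}"]) (auto dest: motzkin_edge_range[OF m])
  have "j \<in> ?J" using e dir_diagram_edge[OF d e(1)] by auto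
  then have "Min ?J \<in> ?J" using fin by (intro Min_in) auto
  then obtain i0 where i0: "{T i0, B (Min ?J)} \<in> d" "i0 < Min ?J" by blast
  then obtain n where n: "Min ?J = n + 1" by (cases "Min ?J") auto
  have "{T i, B n} \<notin> d" for i
  proof
    assume h: "{T i, B n} \<in> d"
    have "i < i0" using motzkin_vertical_mono_iff[OF m h i0(1)] n by simp
    then have "n \<in> ?J" using h i0(2) n dir_diagram_edge[OF d h] by auto
    then show False using Min_le[OF fin] n by fastforce
  qed
  then show ?thesis using i0 n by (intro exI[of _ i0] exI[of _ n]) simp
qed

theorem RPk_generated:
  "(RPk k :: (diagram \<Rightarrow> 'a::comm_ring_1) set) =
     alg_gen k x ({basis (r_diag k i) | i. 1 \<le> i \<and> i < k} \<union> {basis (p_diag k j) | j. 1 \<le> j \<and> j \<le> k})"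
  unfolding RPk_def rp_diagram_dir
proof (rule dir_span_alg_gen)
  fix g :: "diagram \<Rightarrow> 'a"
  assume "g \<in> {basis (r_diag k i) | i. 1 \<le> i \<and> i < k} \<union> {basis (p_diag k j) | j. 1 \<le> j \<and> j \<le> k}"
  moreover have "dir_diagram k (\<lambda>i j. j \<le> i) (slide k (i + 1) i)" if "1 \<le> i" "i < k" for i
    by (rule dir_diagram_slide) (use that in auto)
  moreover have "dir_diagram k (\<lambda>i j. j \<le> i) (p_diag k j)" for j by (rule dir_diagram_p_diag) simp
  ultimately show "\<exists>d. g = basis d \<and> dir_diagram k (\<lambda>i j. j \<le> i) d" by (auto simp: r_diag_slide)
next
  fix d i j assume "dir_diagram k (\<lambda>i j. j \<le> i) d" "{T i, B j} \<in> d" "i \<noteq> j"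
  then obtain i0 m where h: "{T i0, B m} \<in> d" "m < i0" "\<forall>i. {T i, B (m + 1)} \<notin> d"
    using rp_reducible by blast
  have "1 \<le> m" "m < k" using motzkin_edge_range[OF dir_diagram_motzkin[OF \<open>dir_diagram _ _ d\<close>] h(1)] h(2)
    by auto
  then have "basis (slide k (m + 1) m) \<in> {basis (r_diag k i) | i. 1 \<le> i \<and> i < k} \<union>
      {basis (p_diag k j) | j. 1 \<le> j \<and> j \<le> k}" by (auto simp: r_diag_slide)
  then show "\<exists>i0 a b. {T i0, B b} \<in> d \<and> step_toward i0 b a \<and> a \<le> i0 \<and> (\<forall>i. {T i, B a} \<notin> d) \<and>
      basis (slide k a b) \<in> {basis (r_diag k i) | i. 1 \<le> i \<and> i < k} \<union> {basis (p_diag k j) | j. 1 \<le> j \<and> j \<le> k}"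
    using h by (intro exI[of _ i0] exI[of _ "m + 1"] exI[of _ m]) (simp add: step_toward_def)
qed auto

theorem LPk_generated:
  "(LPk k :: (diagram \<Rightarrow> 'a::comm_ring_1) set) =
     alg_gen k x ({basis (l_diag k i) | i. 1 \<le> i \<and> i < k} \<union> {basis (p_diag k j) | j. 1 \<le> j \<and> j \<le> k})"
  unfolding LPk_def lp_diagram_dir
proof (rule dir_span_alg_gen)
  fix g :: "diagram \<Rightarrow> 'a"
  assume "g \<in> {basis (l_diag k i) | i. 1 \<le> i \<and> i < k} \<union> {basis (p_diag k j) | j. 1 \<le> j \<and> j \<le> k}"
  moreover have "dir_diagram k (\<le>) (slide k i (i + 1))" if "1 \<le> i" "i < k" for i
    by (rule dir_diagram_slide) (use that in auto)
  moreover have "dir_diagram k (\<le>) (p_diag k j)" for j by (rule dir_diagram_p_diag) simp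
  ultimately show "\<exists>d. g = basis d \<and> dir_diagram k (\<le>) d" by (auto simp: l_diag_slide)
next
  fix d i j assume "dir_diagram k (\<le>) d" "{T i, B j} \<in> d" "i \<noteq> j"
  then obtain i0 m where h: "{T i0, B (m + 1)} \<in> d" "i0 \<le> m" "\<forall>i. {T i, B m} \<notin> d"
    using lp_reducible by blast
  have "1 \<le> m" "m < k" using motzkin_edge_range[OF dir_diagram_motzkin[OF \<open>dir_diagram _ _ d\<close>] h(1)] h(2)
    by auto
  then have "basis (slide k m (m + 1)) \<in> {basis (l_diag k i) | i. 1 \<le> i \<and> i < k} \<union>
      {basis (p_diag k j) | j. 1 \<le> j \<and> j \<le> k}" by (auto simp: l_diag_slide)
  then show "\<exists>i0 a b. {T i0, B b} \<in> d \<and> step_toward i0 b a \<and> i0 \<le> a \<and> (\<forall>i. {T i, B a} \<notin> d) \<and>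
      basis (slide k a b) \<in> {basis (l_diag k i) | i. 1 \<le> i \<and> i < k} \<union> {basis (p_diag k j) | j. 1 \<le> j \<and> j \<le> k}"
    using h by (intro exI[of _ i0] exI[of _ m] exI[of _ "m + 1"]) (simp add: step_toward_def)
qed auto

text \<open>The rank of a among the elements of A: used to push the strands of a diagram to the left.\<close>
definition rank :: "nat set \<Rightarrow> nat \<Rightarrow> nat" where
  "rank A a = card {x\<in>A. x < a} + 1"

lemma rank_pos: "1 \<le> rank A a"
  by (simp add: rank_def)

lemma rank_strict_mono:
  assumes "finite A" "a \<in> A" "a < a'"
  shows "rank A a < rank A a'"
proof -
  have "{x\<in>A. x < a} \<subset> {x\<in>A. x < a'}" using assms by auto
  then show ?thesis unfolding rank_def using assms(1) by (simp add: psubset_card_mono)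
qed

lemma rank_less_iff: "finite A \<Longrightarrow> a \<in> A \<Longrightarrow> a' \<in> A \<Longrightarrow> rank A a < rank A a' \<longleftrightarrow> a < a'"
  using rank_strict_mono[of A a a'] rank_strict_mono[of A a' a] by (metis less_asym' linorder_neqE_nat)

lemma rank_le_card:
  assumes "finite A" "a \<in> A"
  shows "rank A a \<le> card A"
proof -
  have "{x\<in>A. x < a} \<subset> A" using assms by auto
  then show ?thesis unfolding rank_def using assms(1) by (simp add: psubset_card_mono Suc_le_eq)
qed

lemma rank_le_self:
  assumes "\<forall>x\<in>A. 1 \<le> x" "a \<in> A"
  shows "rank A a \<le> a"
proof -
  have "card {x\<in>A. x < a} \<le> card {1..<a}" using assms by (intro card_mono) auto
  then show ?thesis unfolding rank_def using assms by auto
qed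

lemma rank_image:
  assumes "finite A"
  shows "rank A ` A = {1..card A}"
proof -
  have "inj_on (rank A) A"
    unfolding inj_on_def using rank_less_iff[OF assms] by (metis linorder_neqE_nat less_irrefl)
  then have "card (rank A ` A) = card A" by (rule card_image)
  moreover have "rank A ` A \<subseteq> {1..card A}" using rank_le_card[OF assms] rank_pos by auto
  ultimately show ?thesis by (intro card_subset_eq) auto
qed

definition vp :: "nat \<Rightarrow> nat \<Rightarrow> vtx" where
  "vp k p = (if p \<le> k then T p else B (2 * k + 1 - p))"

lemma vp_bpos: "v \<in> verts k \<Longrightarrow> vp k (bpos k v) = v"
  by (cases v) (auto simp: vp_def)

lemma bpos_vp: "1 \<le> p \<Longrightarrow> p \<le> 2 * k \<Longrightarrow> bpos k (vp k p) = p \<and> vp k p \<in> verts k"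
  by (auto simp: vp_def)

definition arcs :: "nat \<Rightarrow> nat \<Rightarrow> nat \<Rightarrow> diagram" where
  "arcs k lo hi = {{vp k (lo + 2 * q), vp k (lo + 2 * q + 1)} | q. lo + 2 * q + 1 \<le> hi}"

lemma arcs_elem:
  assumes "e \<in> arcs k lo hi" "1 \<le> lo" "hi \<le> 2 * k"
  obtains q where "e = {vp k (lo + 2 * q), vp k (lo + 2 * q + 1)}" "lo + 2 * q + 1 \<le> hi"
    "bpos k (vp k (lo + 2 * q)) = lo + 2 * q" "bpos k (vp k (lo + 2 * q + 1)) = lo + 2 * q + 1"
    "vp k (lo + 2 * q) \<in> verts k" "vp k (lo + 2 * q + 1) \<in> verts k"
proof -
  obtain q where q: "e = {vp k (lo + 2 * q), vp k (lo + 2 * q + 1)}" "lo + 2 * q + 1 \<le> hi"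
    using assms(1) unfolding arcs_def by blast
  have b1: "bpos k (vp k (lo + 2 * q)) = lo + 2 * q \<and> vp k (lo + 2 * q) \<in> verts k"
    using q(2) assms(2,3) by (intro bpos_vp) simp_all
  have b2: "bpos k (vp k (lo + 2 * q + 1)) = lo + 2 * q + 1 \<and> vp k (lo + 2 * q + 1) \<in> verts k"
    using q(2) assms(2,3) by (intro bpos_vp) simp_all
  show ?thesis using that[OF q conjunct1[OF b1] conjunct1[OF b2] conjunct2[OF b1] conjunct2[OF b2]] .
qed

lemma arcs_pos:
  assumes "e \<in> arcs k lo hi" "v \<in> e" "1 \<le> lo" "hi \<le> 2 * k"
  shows "v \<in> verts k \<and> lo \<le> bpos k v \<and> bpos k v \<le> hi"
proof (rule arcs_elem[OF assms(1,3,4)])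
  fix q assume q: "e = {vp k (lo + 2 * q), vp k (lo + 2 * q + 1)}" "lo + 2 * q + 1 \<le> hi"
    "bpos k (vp k (lo + 2 * q)) = lo + 2 * q" "bpos k (vp k (lo + 2 * q + 1)) = lo + 2 * q + 1"
    "vp k (lo + 2 * q) \<in> verts k" "vp k (lo + 2 * q + 1) \<in> verts k"
  have "v = vp k (lo + 2 * q) \<or> v = vp k (lo + 2 * q + 1)" using assms(2) q(1) by blast
  then show ?thesis using q(2-6) by auto
qed

lemma arcs_vertex_pos:
  assumes "e \<in> arcs k lo hi" "1 \<le> lo" "hi \<le> 2 * k"
  obtains q where "\<forall>v\<in>e. bpos k v = lo + 2 * q \<or> bpos k v = lo + 2 * q + 1"
proof (rule arcs_elem[OF assms])
  fix q assume "e = {vp k (lo + 2 * q), vp k (lo + 2 * q + 1)}"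
    "bpos k (vp k (lo + 2 * q)) = lo + 2 * q" "bpos k (vp k (lo + 2 * q + 1)) = lo + 2 * q + 1"
  then have "\<forall>v\<in>e. bpos k v = lo + 2 * q \<or> bpos k v = lo + 2 * q + 1" by auto
  then show ?thesis by (rule that)
qed

lemma motzkin_arcs:
  assumes lo: "1 \<le> lo" and hi: "hi \<le> 2 * k"
  shows "motzkin k (arcs k lo hi)"
proof -
  have "is_edge k e" if "e \<in> arcs k lo hi" for e
  proof (rule arcs_elem[OF that lo hi])
    fix q assume q: "e = {vp k (lo + 2 * q), vp k (lo + 2 * q + 1)}"
      "bpos k (vp k (lo + 2 * q)) = lo + 2 * q" "bpos k (vp k (lo + 2 * q + 1)) = lo + 2 * q + 1"
      "vp k (lo + 2 * q) \<in> verts k" "vp k (lo + 2 * q + 1) \<in> verts k"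
    have "vp k (lo + 2 * q) \<noteq> vp k (lo + 2 * q + 1)"
    proof
      assume "vp k (lo + 2 * q) = vp k (lo + 2 * q + 1)"
      then have "bpos k (vp k (lo + 2 * q)) = bpos k (vp k (lo + 2 * q + 1))" by simp
      then show False using q(2,3) by simp
    qed
    then show ?thesis unfolding is_edge_def using q(1,4,5)
      by (intro exI[of _ "vp k (lo + 2 * q)"] exI[of _ "vp k (lo + 2 * q + 1)"]) simp
  qed
  moreover have "e1 = e2" if e: "e1 \<in> arcs k lo hi" "e2 \<in> arcs k lo hi" "w \<in> e1" "w \<in> e2" for e1 e2 w
  proof -
    obtain q1 where e1: "e1 = {vp k (lo + 2 * q1), vp k (lo + 2 * q1 + 1)}" "lo + 2 * q1 + 1 \<le> hi"
      "bpos k (vp k (lo + 2 * q1)) = lo + 2 * q1" "bpos k (vp k (lo + 2 * q1 + 1)) = lo + 2 * q1 + 1"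
      "vp k (lo + 2 * q1) \<in> verts k" "vp k (lo + 2 * q1 + 1) \<in> verts k"
      by (rule arcs_elem[OF e(1) lo hi])
    obtain q2 where e2: "e2 = {vp k (lo + 2 * q2), vp k (lo + 2 * q2 + 1)}" "lo + 2 * q2 + 1 \<le> hi"
      "bpos k (vp k (lo + 2 * q2)) = lo + 2 * q2" "bpos k (vp k (lo + 2 * q2 + 1)) = lo + 2 * q2 + 1"
      "vp k (lo + 2 * q2) \<in> verts k" "vp k (lo + 2 * q2 + 1) \<in> verts k"
      by (rule arcs_elem[OF e(2) lo hi])
    have "bpos k w = lo + 2 * q1 \<or> bpos k w = lo + 2 * q1 + 1" using e(3) e1(1,3,4) by auto
    moreover have "bpos k w = lo + 2 * q2 \<or> bpos k w = lo + 2 * q2 + 1" using e(4) e2(1,3,4) by auto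
    ultimately have "2 * q1 = 2 * q2 \<or> 2 * q1 = 2 * q2 + 1 \<or> 2 * q1 + 1 = 2 * q2" by auto
    then have "q1 = q2" by presburger
    then show ?thesis using e1(1) e2(1) by simp
  qed
  moreover have "noncrossing k (arcs k lo hi)" unfolding noncrossing_def
  proof (intro ballI allI impI notI)
    fix e1 e2 a b c e
    assume e: "e1 \<in> arcs k lo hi" "e2 \<in> arcs k lo hi" "e1 = {a, b} \<and> e2 = {c, e}"
      and cr: "bpos k a < bpos k c \<and> bpos k c < bpos k b \<and> bpos k b < bpos k e"
    have "a \<in> e1" "b \<in> e1" using e(3) by auto
    \<comment> \<open>no position lies strictly between the two ends of an arc\<close>
    moreover obtain q where "\<forall>v\<in>e1. bpos k v = lo + 2 * q \<or> bpos k v = lo + 2 * q + 1"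
      by (rule arcs_vertex_pos[OF e(1) lo hi])
    ultimately have "bpos k a = lo + 2 * q \<or> bpos k a = lo + 2 * q + 1"
      "bpos k b = lo + 2 * q \<or> bpos k b = lo + 2 * q + 1" by blast+
    then show False using cr by linarith
  qed
  ultimately show ?thesis unfolding motzkin_def by blast
qed

lemma arcs_cover:
  assumes "1 \<le> lo" "hi \<le> 2 * k" "even (hi + 1 - lo)" "lo \<le> p" "p \<le> hi"
  shows "covered (arcs k lo hi) (vp k p)"
proof -
  obtain m where m: "hi + 1 - lo = 2 * m" using assms(3) by blast
  define q where "q = (p - lo) div 2"
  have q: "p = lo + 2 * q \<or> p = lo + 2 * q + 1" unfolding q_def using assms(4) by presburger
  have "lo + 2 * q + 1 \<le> hi" using m q assms(4,5) by presburger
  then have "{vp k (lo + 2 * q), vp k (lo + 2 * q + 1)} \<in> arcs k lo hi" unfolding arcs_def by blast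
  then show ?thesis unfolding covered_def using q by blast
qed

lemma motzkin_Un_separated:
  assumes m1: "motzkin k d1" and m2: "motzkin k d2"
    and out: "\<And>e v. e \<in> d1 \<Longrightarrow> v \<in> e \<Longrightarrow> bpos k v < lo \<or> hi < bpos k v"
    and inside: "\<And>e v. e \<in> d2 \<Longrightarrow> v \<in> e \<Longrightarrow> lo \<le> bpos k v \<and> bpos k v \<le> hi"
  shows "motzkin k (d1 \<union> d2)"
proof -
  have "\<forall>e\<in>d1. is_edge k e" "\<forall>e\<in>d2. is_edge k e" using m1 m2 by (simp_all add: motzkin_def)
  then have "\<forall>e\<in>d1 \<union> d2. is_edge k e" by blast
  moreover have "e1 = e2" if e: "e1 \<in> d1 \<union> d2" "e2 \<in> d1 \<union> d2" "w \<in> e1" "w \<in> e2" for e1 e2 w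
  proof -
    have "\<not> (e1 \<in> d1 \<and> e2 \<in> d2)" "\<not> (e1 \<in> d2 \<and> e2 \<in> d1)"
      using out[of e1 w] inside[of e2 w] out[of e2 w] inside[of e1 w] e(3,4) by auto
    then have "(e1 \<in> d1 \<and> e2 \<in> d1) \<or> (e1 \<in> d2 \<and> e2 \<in> d2)" using e(1,2) by blast
    then show ?thesis using motzkin_disj[OF m1 _ _ e(3,4)] motzkin_disj[OF m2 _ _ e(3,4)] by blast
  qed
  moreover have "noncrossing k (d1 \<union> d2)" unfolding noncrossing_def
  proof (intro ballI allI impI notI)
    fix e1 e2 a b c e
    assume e: "e1 \<in> d1 \<union> d2" "e2 \<in> d1 \<union> d2" "e1 = {a, b} \<and> e2 = {c, e}"
      and cr: "bpos k a < bpos k c \<and> bpos k c < bpos k b \<and> bpos k b < bpos k e"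
    have ab: "a \<in> e1" "b \<in> e1" and ce: "c \<in> e2" "e \<in> e2" using e(3) by auto
    \<comment> \<open>an edge inside the interval and one outside cannot interleave\<close>
    have "\<not> (e1 \<in> d1 \<and> e2 \<in> d2)"
      using out[of e1 b] inside[of e2 c] inside[of e2 e] ab ce cr by fastforce
    moreover have "\<not> (e1 \<in> d2 \<and> e2 \<in> d1)"
      using out[of e2 c] inside[of e1 a] inside[of e1 b] ab ce cr by fastforce
    moreover have "e1 \<notin> d1 \<or> e2 \<notin> d1" "e1 \<notin> d2 \<or> e2 \<notin> d2"
      using motzkin_noncrossing[OF m1, of a b c e] motzkin_noncrossing[OF m2, of a b c e] e(3) cr by auto
    ultimately show False using e(1,2) by blast
  qed
  ultimately show ?thesis unfolding motzkin_def by blast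
qed

subsection \<open>Factorisation of a Motzkin diagram\<close>

text \<open>The relabelling psi moves the covered top vertices, in order, to the first card TA top
  positions and the covered bottom vertices to the last card BA bottom positions. Then
  d = rr tt ll, where rr and ll are the vertical diagrams realising psi on the top and bottom
  row, and tt is the image of d under psi completed by arcs between the remaining vertices.\<close>
locale motzkin_factorisation =
  fixes k :: nat and d :: diagram
  assumes motzkin_d: "motzkin k d"
begin

definition TA :: "nat set" where "TA = {i. covered d (T i)}"
definition BA :: "nat set" where "BA = {j. covered d (B j)}"

definition psi :: "vtx \<Rightarrow> vtx" where
  "psi v = (case v of T i \<Rightarrow> T (rank TA i) | B j \<Rightarrow> B (rank BA j))"

definition rr :: diagram where "rr = {{T i, B (rank TA i)} | i. i \<in> TA}"
definition ll :: diagram where "ll = {{T (rank BA j), B j} | j. j \<in> BA}"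

text \<open>The image of d under psi, and the boundary interval left free by it.\<close>
definition img :: diagram where "img = pull (\<lambda>u a. covered d a \<and> u = psi a) d"
definition lo :: nat where "lo = card TA + 1"
definition hi :: nat where "hi = 2 * k - card BA"
definition tt :: diagram where "tt = img \<union> arcs k lo hi"

lemma psi_T [simp]: "psi (T i) = T (rank TA i)"
  and psi_B [simp]: "psi (B j) = B (rank BA j)"
  by (simp_all add: psi_def)

lemma covered_verts: "covered d v \<Longrightarrow> v \<in> verts k"
  unfolding covered_def using motzkin_verts[OF motzkin_d] by blast

lemma covered_edge: "E \<in> d \<Longrightarrow> v \<in> E \<Longrightarrow> covered d v"
  unfolding covered_def by blast

lemma TA_sub: "TA \<subseteq> {1..k}" and BA_sub: "BA \<subseteq> {1..k}"
  unfolding TA_def BA_def using covered_verts by fastforce+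

lemma finite_TA: "finite TA" and finite_BA: "finite BA"
  using TA_sub BA_sub finite_subset by blast+

lemma card_TA: "card TA \<le> k" and card_BA: "card BA \<le> k"
  using card_mono[OF _ TA_sub] card_mono[OF _ BA_sub] by simp_all

text \<open>Every vertex meets at most one edge and every edge has two vertices, so the number of
  covered vertices is even.\<close>
lemma even_covered: "even (card TA + card BA)"
proof -
  have "card (\<Union>d) = sum card d"
  proof (rule card_Union_disjoint)
    show "pairwise disjnt d" unfolding pairwise_def disjnt_def using motzkin_disj[OF motzkin_d] by blast
    show "\<And>A. A \<in> d \<Longrightarrow> finite A" using motzkin_edge[OF motzkin_d] by blast
  qed
  also have "sum card d = sum (\<lambda>_. 2) d"
  proof (rule sum.cong)
    fix E assume "E \<in> d"
    then obtain u v where "E = {u, v}" "u \<noteq> v" using motzkin_edge[OF motzkin_d] by blast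
    then show "card E = 2" by simp
  qed simp
  finally have "card (\<Union>d) = 2 * card d" by simp
  moreover have "\<Union>d = T ` TA \<union> B ` BA"
  proof (intro set_eqI iffI)
    fix v assume "v \<in> \<Union>d"
    then have "covered d v" unfolding covered_def by blast
    then show "v \<in> T ` TA \<union> B ` BA" by (cases v) (auto simp: TA_def BA_def)
  next
    fix v assume "v \<in> T ` TA \<union> B ` BA"
    then have "covered d v" by (auto simp: TA_def BA_def)
    then show "v \<in> \<Union>d" unfolding covered_def by blast
  qed
  moreover have "card (T ` TA \<union> B ` BA) = card TA + card BA"
    by (subst card_Un_disjoint) (auto simp: finite_TA finite_BA card_image inj_on_def)
  ultimately show ?thesis by simp
qed

lemma psi_outside:
  assumes "covered d v"
  shows "psi v \<in> verts k \<and> (bpos k (psi v) < lo \<or> hi < bpos k (psi v))"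
proof (cases v)
  case (T i)
  then have "i \<in> TA" using assms by (simp add: TA_def)
  then show ?thesis
    using T rank_le_card[OF finite_TA] rank_pos[of TA i] card_TA unfolding lo_def by fastforce
next
  case (B j)
  then have "j \<in> BA" using assms by (simp add: BA_def)
  then show ?thesis
    using B rank_le_card[OF finite_BA] rank_pos[of BA j] card_BA unfolding hi_def by fastforce
qed

lemma psi_mono:
  assumes cx: "covered d x" and cy: "covered d y" and xy: "bpos k x < bpos k y"
  shows "bpos k (psi x) < bpos k (psi y)"
proof -
  have v: "x \<in> verts k" "y \<in> verts k" using covered_verts cx cy by blast+
  show ?thesis
  proof (cases x; cases y)
    fix i i' assume "x = T i" "y = T i'"
    then show ?thesis using cx cy xy rank_strict_mono[OF finite_TA] by (auto simp: TA_def)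
  next
    fix i j assume "x = T i" "y = B j"
    then show ?thesis using psi_outside[OF cx] psi_outside[OF cy] by auto
  next
    fix j i assume "x = B j" "y = T i"
    then show ?thesis using v xy by auto
  next
    fix j j' assume x: "x = B j" and y: "y = B j'"
    then have "j' < j" "j' \<in> BA" using v xy cy by (auto simp: BA_def)
    then have "rank BA j' < rank BA j" by (rule rank_strict_mono[OF finite_BA, rotated])
    moreover have "rank BA j \<le> k" using rank_le_card[OF finite_BA] card_BA cx x
      by (fastforce simp: BA_def)
    ultimately show ?thesis using x y by auto
  qed
qed

lemma psi_less_iff:
  assumes "covered d x" "covered d y"
  shows "bpos k (psi x) < bpos k (psi y) \<longleftrightarrow> bpos k x < bpos k y"
proof
  assume "bpos k (psi x) < bpos k (psi y)"
  moreover have "x \<noteq> y" using calculation by auto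
  then have "bpos k x \<noteq> bpos k y" using bpos_inj covered_verts assms by blast
  ultimately show "bpos k x < bpos k y" using psi_mono[OF assms(2,1)] by fastforce
qed (rule psi_mono[OF assms])

lemma psi_inj: "covered d x \<Longrightarrow> covered d y \<Longrightarrow> psi x = psi y \<Longrightarrow> x = y"
  using psi_less_iff bpos_inj covered_verts by (metis linorder_neqE_nat less_irrefl)

lemma motzkin_img: "motzkin k img"
  unfolding img_def
proof (rule motzkin_pull[OF motzkin_d])
  show "a = b" if "covered d a \<and> x = psi a" "covered d b \<and> x = psi b" for x a b
    using that psi_inj by blast
  show "x \<in> verts k" if "covered d a \<and> x = psi a" for x a using that psi_outside by blast
  show "bpos k a < bpos k b" if "covered d a \<and> x = psi a" "covered d b \<and> y = psi b"
    "bpos k x < bpos k y" for x y a b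
    using that psi_less_iff by blast
qed auto

lemma img_vertex: "e \<in> img \<Longrightarrow> v \<in> e \<Longrightarrow> \<exists>a. covered d a \<and> v = psi a"
  unfolding img_def by (elim pullE) auto

lemma covered_img: "covered d a \<Longrightarrow> covered img (psi a)"
proof -
  assume "covered d a"
  then obtain E where E: "E \<in> d" "a \<in> E" unfolding covered_def by blast
  then obtain u v where "E = {u, v}" "u \<noteq> v" using motzkin_edge[OF motzkin_d] by blast
  then obtain b where b: "E = {a, b}" "a \<noteq> b" using E(2) by auto
  then have "psi a \<noteq> psi b" using psi_inj covered_edge[OF E(1)] by blast
  then have "{psi a, psi b} \<in> img" unfolding img_def
    using b E(1) covered_edge[OF E(1)] by (intro pullI) auto
  then show ?thesis unfolding covered_def by blast
qed

lemma lo_hi: "1 \<le> lo" "hi \<le> 2 * k"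
  unfolding lo_def hi_def by simp_all

lemma motzkin_tt: "motzkin k tt"
  unfolding tt_def
proof (rule motzkin_Un_separated[OF motzkin_img motzkin_arcs[OF lo_hi]])
  show "bpos k v < lo \<or> hi < bpos k v" if "e \<in> img" "v \<in> e" for e v
    using img_vertex[OF that] psi_outside by blast
  show "lo \<le> bpos k v \<and> bpos k v \<le> hi" if "e \<in> arcs k lo hi" "v \<in> e" for e v
    using arcs_pos[OF that lo_hi] by blast
qed

text \<open>The middle factor covers every vertex: the outer positions by the image of d, the
  interval in between, which has even length, by the arcs.\<close>
lemma tl_diagram_tt: "tl_diagram k tt"
  unfolding tl_diagram_def
proof (intro conjI ballI motzkin_tt)
  fix v assume v: "v \<in> verts k"
  define p where "p = bpos k v"
  have p: "1 \<le> p" "p \<le> 2 * k" "vp k p = v" unfolding p_def using bpos_range[OF v] vp_bpos[OF v] by auto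
  have covered_tt: "covered tt w" if "covered img w \<or> covered (arcs k lo hi) w" for w
    using that unfolding tt_def covered_def by blast
  consider "p < lo" | "hi < p" | "lo \<le> p \<and> p \<le> hi" by linarith
  then show "covered tt v"
  proof cases
    case 1
    then have "p \<in> rank TA ` TA" using rank_image[OF finite_TA] p unfolding lo_def by auto
    then obtain i where i: "i \<in> TA" "rank TA i = p" by blast
    have "p \<le> k" using 1 card_TA unfolding lo_def by simp
    then have "vp k p = T p" unfolding vp_def by simp
    then have "v = T p" using p(3) by simp
    then have "v = psi (T i)" using i by simp
    moreover have "covered img (psi (T i))" using i(1) by (intro covered_img) (simp add: TA_def)
    ultimately show ?thesis using covered_tt by blast
  next
    case 2
    define j where "j = 2 * k + 1 - p"
    have "1 \<le> j" "j \<le> card BA" using 2 p card_BA unfolding j_def hi_def by auto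
    then have "j \<in> rank BA ` BA" using rank_image[OF finite_BA] by auto
    then obtain j' where j': "j' \<in> BA" "rank BA j' = j" by blast
    have "\<not> p \<le> k" using 2 card_BA unfolding hi_def by simp
    then have "vp k p = B j" unfolding vp_def j_def by simp
    then have "v = B j" using p(3) by simp
    then have "v = psi (B j')" using j' by simp
    moreover have "covered img (psi (B j'))" using j'(1) by (intro covered_img) (simp add: BA_def)
    ultimately show ?thesis using covered_tt by blast
  next
    case 3
    have "hi + 1 - lo = 2 * k - (card TA + card BA)" using card_TA card_BA unfolding lo_def hi_def
      by simp
    then have "even (hi + 1 - lo)" using even_covered by simp
    then have "covered (arcs k lo hi) (vp k p)" using arcs_cover[OF lo_hi] 3 by blast
    then show ?thesis using p(3) covered_tt by simp
  qed
qed

lemma rr_mem: "{T a, B b} \<in> rr \<longleftrightarrow> a \<in> TA \<and> b = rank TA a"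
  unfolding rr_def by (auto simp: doubleton_eq_iff)

lemma ll_mem: "{T a, B b} \<in> ll \<longleftrightarrow> b \<in> BA \<and> a = rank BA b"
  unfolding ll_def by (auto simp: doubleton_eq_iff)

lemma vertical_rr: "vertical rr" and vertical_ll: "vertical ll"
  unfolding rr_def ll_def vertical_def by blast+

lemma rp_rr: "rp_diagram k rr"
  unfolding rp_diagram_dir
proof (rule dir_diagramI[OF _ vertical_rr])
  have pos: "\<forall>x\<in>TA. 1 \<le> x" using TA_sub by auto
  show "motzkin k rr"
  proof (rule monotone_vertical_motzkin[OF vertical_rr])
    show "1 \<le> i \<and> i \<le> k \<and> 1 \<le> j \<and> j \<le> k" if "{T i, B j} \<in> rr" for i j
      using that TA_sub rank_pos[of TA i] rank_le_self[OF pos, of i] unfolding rr_mem by auto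
    show "i < i' \<longleftrightarrow> j < j'" if "{T i, B j} \<in> rr" "{T i', B j'} \<in> rr" for i j i' j'
      using that rank_less_iff[OF finite_TA] unfolding rr_mem by auto
  qed
  show "j \<le> i" if "{T i, B j} \<in> rr" for i j using that rank_le_self[OF pos] unfolding rr_mem by auto
qed

lemma lp_ll: "lp_diagram k ll"
  unfolding lp_diagram_dir
proof (rule dir_diagramI[OF _ vertical_ll])
  have pos: "\<forall>x\<in>BA. 1 \<le> x" using BA_sub by auto
  show "motzkin k ll"
  proof (rule monotone_vertical_motzkin[OF vertical_ll])
    show "1 \<le> i \<and> i \<le> k \<and> 1 \<le> j \<and> j \<le> k" if "{T i, B j} \<in> ll" for i j
      using that BA_sub rank_pos[of BA j] rank_le_self[OF pos, of j] unfolding ll_mem by auto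
    show "i < i' \<longleftrightarrow> j < j'" if "{T i, B j} \<in> ll" "{T i', B j'} \<in> ll" for i j i' j'
      using that rank_less_iff[OF finite_BA] unfolding ll_mem by auto
  qed
  show "i \<le> j" if "{T i, B j} \<in> ll" for i j using that rank_le_self[OF pos] unfolding ll_mem by auto
qed

lemma via_ll_rr: "(via_below ll OO via rr) x z \<longleftrightarrow> covered d x \<and> z = psi x"
proof (cases x)
  case (T i) then show ?thesis by (auto simp: rr_mem TA_def)
next
  case (B j) then show ?thesis by (auto simp: ll_mem BA_def)
qed

theorem factorisation: "compose (compose rr tt) ll = d"
proof -
  have mrr: "motzkin k rr" using rp_rr by (simp add: rp_diagram_def)
  have mll: "motzkin k ll" using lp_ll by (simp add: lp_diagram_def)
  have mrt: "motzkin k (compose rr tt)"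
    by (rule motzkin_compose_vertical_left[OF mrr vertical_rr motzkin_tt])
  let ?Phi = "\<lambda>x z. covered d x \<and> z = psi x"
  have Phi_inj: "\<And>x y a. ?Phi x a \<Longrightarrow> ?Phi y a \<Longrightarrow> x = y" using psi_inj by blast
  have "compose (compose rr tt) ll = pull (via_below ll) (pull (via rr) tt)"
    using compose_vertical_right[OF mrt mll vertical_ll]
      compose_vertical_left[OF mrr vertical_rr motzkin_tt] by simp
  also have "\<dots> = pull (via_below ll OO via rr) tt"
    by (rule pull_pull) (rule via_below_inj[OF mll])
  also have "\<dots> = pull ?Phi tt"
    by (rule arg_cong[where f = "\<lambda>R. pull R tt"]) (intro ext via_ll_rr)
  also have "\<dots> = pull ?Phi img \<union> pull ?Phi (arcs k lo hi)"
    unfolding tt_def by (rule pull_Un)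
  also have "pull ?Phi (arcs k lo hi) = {}"
  proof -
    have "\<not> ?Phi x a" if "e \<in> arcs k lo hi" "a \<in> e" for e x a
      using arcs_pos[OF that lo_hi] psi_outside by fastforce
    then show ?thesis by (auto elim!: pullE)
  qed
  also have "pull ?Phi img = pull (?Phi OO (\<lambda>u a. covered d a \<and> u = psi a)) d"
    unfolding img_def by (rule pull_pull[OF Phi_inj])
  also have "?Phi OO (\<lambda>u a. covered d a \<and> u = psi a) = (\<lambda>x a. covered d a \<and> x = a)"
    using psi_inj by (auto simp: fun_eq_iff)
  also have "pull (\<lambda>x a. covered d a \<and> x = a) d = d"
    by (rule pull_restricted_id[OF motzkin_d covered_edge])
  finally show ?thesis by simp
qed

end

corollary motzkin_diagram_factorisation:
  assumes "motzkin k d"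
  shows "\<exists>r t l. rp_diagram k r \<and> tl_diagram k t \<and> lp_diagram k l \<and>
           kappa r t = 0 \<and> kappa (compose r t) l = 0 \<and> compose (compose r t) l = d"
proof -
  interpret motzkin_factorisation k d by (rule motzkin_factorisation.intro[OF assms])
  show ?thesis
  proof (intro exI conjI)
    show "rp_diagram k rr" by (rule rp_rr)
    show "tl_diagram k tt" by (rule tl_diagram_tt)
    show "lp_diagram k ll" by (rule lp_ll)
    show "kappa rr tt = 0" by (rule kappa_vertical_left[OF vertical_rr])
    show "kappa (compose rr tt) ll = 0" by (rule kappa_vertical_right[OF vertical_ll])
    show "compose (compose rr tt) ll = d" by (rule factorisation)
  qed
qed

text \<open>Since the factorisation has no closed loops, every basis diagram is a product r t l.\<close>
lemma basis_in_triple_prod: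
  assumes "motzkin k d"
  shows "(basis d :: diagram \<Rightarrow> 'a::comm_ring_1) \<in> triple_prod k x (RPk k) (TLk k) (LPk k)"
proof -
  obtain r t l where rtl: "rp_diagram k r" "tl_diagram k t" "lp_diagram k l" "kappa r t = 0"
    "kappa (compose r t) l = 0" "compose (compose r t) l = d"
    using motzkin_diagram_factorisation[OF assms] by blast
  have mr: "motzkin k r" "vertical r" using rtl(1) unfolding rp_diagram_dir
    by (simp_all add: dir_diagram_motzkin dir_diagram_vertical)
  have mt: "motzkin k t" using rtl(2) by (simp add: tl_diagram_def)
  have ml: "motzkin k l" using rtl(3) by (simp add: lp_diagram_def)
  have "mmult k x (mmult k x (basis r) (basis t)) (basis l) = (basis d :: diagram \<Rightarrow> 'a)"
    using mmult_basis_no_loops[OF mr(1) mt rtl(4), where x = x]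
      mmult_basis_no_loops[OF motzkin_compose_vertical_left[OF mr mt] ml rtl(5), where x = x] rtl(6)
    by simp
  moreover have "basis r \<in> RPk k" "basis t \<in> TLk k" "basis l \<in> LPk k"
    using rtl(1-3) by (auto simp: RPk_def TLk_def LPk_def intro: basis_supported)
  ultimately show ?thesis unfolding triple_prod_def
    by (intro lspan.gen CollectI exI[of _ "basis r"] exI[of _ "basis t"] exI[of _ "basis l"]) simp
qed

theorem Mk_eq_triple_prod:
  "(Mk k :: (diagram \<Rightarrow> 'a::comm_ring_1) set) = triple_prod k x (RPk k) (TLk k) (LPk k)"
proof
  show "Mk k \<subseteq> triple_prod k x (RPk k) (TLk k) (LPk k)"
    unfolding Mk_def triple_prod_def
    by (rule supported_least[OF lin_closed_lspan finite_motzkin_class])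
      (use basis_in_triple_prod[unfolded triple_prod_def] in auto)
next
  have "mmult k x (mmult k x a b) c \<in> supported (motzkin k)" if "c \<in> LPk k"
    for a b c :: "diagram \<Rightarrow> 'a"
  proof (rule supported_mmult[of _ "\<lambda>_. True" _ "lp_diagram k"])
    show "mmult k x a b \<in> supported (\<lambda>_. True)" by (simp add: supported_def)
    show "c \<in> supported (lp_diagram k)" using that by (simp add: LPk_def)
    show "motzkin k (compose d1 d2)" if "motzkin k d1" "motzkin k d2" "lp_diagram k d2" for d1 d2
      using that(3) unfolding lp_diagram_dir
      by (intro motzkin_compose_vertical_right[OF that(1)] dir_diagram_motzkin dir_diagram_vertical)
  qed
  then show "triple_prod k x (RPk k) (TLk k) (LPk k) \<subseteq> Mk k"
    unfolding triple_prod_def Mk_def by (intro lspan_least[OF lin_closed_supported]) blast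
qed

theorem mainTheorem2:
  fixes k :: nat and x :: "'a::comm_ring_1"
  assumes "1 \<le> k"
  shows "(\<forall>d. motzkin k d \<longrightarrow>
            (\<exists>r t l. rp_diagram k r \<and> tl_diagram k t \<and> lp_diagram k l \<and>
               kappa r t = 0 \<and> kappa (compose r t) l = 0 \<and>
               compose (compose r t) l = d))
       \<and> (Mk k :: (diagram \<Rightarrow> 'a) set) = triple_prod k x (RPk k) (TLk k) (LPk k)
       \<and> (RPk k :: (diagram \<Rightarrow> 'a) set) =
            alg_gen k x ({basis (r_diag k i) | i. 1 \<le> i \<and> i < k} \<union>
                         {basis (p_diag k j) | j. 1 \<le> j \<and> j \<le> k})
       \<and> (LPk k :: (diagram \<Rightarrow> 'a) set) =
            alg_gen k x ({basis (l_diag k i) | i. 1 \<le> i \<and> i < k} \<union>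
                         {basis (p_diag k j) | j. 1 \<le> j \<and> j \<le> k})"
proof (intro conjI allI impI)
  show "\<exists>r t l. rp_diagram k r \<and> tl_diagram k t \<and> lp_diagram k l \<and>
          kappa r t = 0 \<and> kappa (compose r t) l = 0 \<and> compose (compose r t) l = d"
    if "motzkin k d" for d
    using that by (rule motzkin_diagram_factorisation)
qed (fact Mk_eq_triple_prod RPk_generated LPk_generated)+

end
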